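(* Let $d\ge3$ and $\lambda\in\mathbb{R}$ be fixed, $p=(1+\lambda n^{-1/3})/(d-1)$, $dn$ even, and $A=A(n)=O(n^{1/6})$. Let $T'=\lceil n^{2/3}/A\rceil$, $T=(d-1)T'$, $L=\lfloor dn/(4T)\rfloor$, and for $B>0$ let $\mathcal{G}_{2L-1}=\{t_{2L-1}\le BLT^{1/2}\}$, where $(t_i)$ are the excursion end times of the stub exploration process described in the context. There exist constants $B_0=B_0(d)>0$ and $A_0=A_0(\lambda,d)>0$ such that for any $A\ge A_0$, $B\ge B_0$ and all sufficiently large $n$, \[\mathbb{P}(\mathcal{G}_{2L-1}^c)\le\exp(-cA^{3/2})\] for some constant $c=c(B)>0$.
   Context: Consider $dn$ stubs $(v,i)$, $v\in[n]$, $i\in[d]$; for a stub $h$ let $v(h)$ be its vertex and $\mathcal{S}(h)=\{(v(h),i):i\in[d]\}$. The following process simultaneously builds a uniformly random $d$-regular multigraph by the configuration model (uniform pairing of stubs) and performs independent $p$-bond percolation on it. Stubs are active, unseen or explored; $\mathcal{A}_t,\mathcal{U}_t,\mathcal{E}_t$ denote these sets after step $t$. Initially pick a uniform random vertex $V_n$; its $d$ stubs are active, all others unseen, $\mathcal{E}_0=\emptyset$. At step $t\ge1$: (a) if $|\mathcal{A}_{t-1}|\ge1$, choose (arbitrarily) an active stub $e_t$ and pair it with a stub $h_t$ chosen uniformly from all stubs not in $\mathcal{E}_{t-1}\cup\{e_t\}$; the edge $e_th_t$ is retained independently with probability $p$ (event $R_t$). (a.1) If $h_t\in\mathcal{U}_{t-1}$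 and $R_t$ occurs: $\mathcal{A}_t=(\mathcal{A}_{t-1}\setminus\{e_t\})\cup(\mathcal{U}_{t-1}\cap\mathcal{S}(h_t)\setminus\{h_t\})$, $\mathcal{U}_t=\mathcal{U}_{t-1}\setminus\mathcal{S}(h_t)$, $\mathcal{E}_t=\mathcal{E}_{t-1}\cup\{e_t,h_t\}$. (a.2) If $h_t\in\mathcal{U}_{t-1}$ and $R_t$ fails: $\mathcal{A}_t=\mathcal{A}_{t-1}\setminus\{e_t\}$, $\mathcal{U}_t=\mathcal{U}_{t-1}\setminus\{h_t\}$, $\mathcal{E}_t=\mathcal{E}_{t-1}\cup\{e_t,h_t\}$. (a.3) If $h_t\in\mathcal{A}_{t-1}$: $\mathcal{A}_t=\mathcal{A}_{t-1}\setminus\{e_t,h_t\}$, $\mathcal{U}_t=\mathcal{U}_{t-1}$, $\mathcal{E}_t=\mathcal{E}_{t-1}\cup\{e_t,h_t\}$. (b) If $|\mathcal{A}_{t-1}|=0$ and $|\mathcal{U}_{t-1}|\ge1$, pick (arbitrarily) an unseen stub $e_t$, declare active all unseen stubs of $\mathcal{S}(e_t)$, and proceed as in (a) with this $e_t$. (c) If both are empty, stop (after $dn/2$ steps). Let $Y_t=|\mathcal{A}_t|$, $t_0=0$, $t_i=\min\{t\ge t_{i-1}+1:Y_t=0\}$. The probability refers to this process (i.e. to percolation on the configuration-model multigraph). *)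

theory Defs
  imports "HOL-Probability.Probability" "HOL-Library.Landau_Symbols"
begin

text \<open>Stubs are pairs (v,i) with v < n, i < d. A state is the triple
 (active, unseen, explored) of stub sets.\<close>

type_synonym stub = "nat \<times> nat"
type_synonym expl_state = "stub set \<times> stub set \<times> stub set"

definition stubs :: "nat \<Rightarrow> nat \<Rightarrow> stub set" where
  "stubs n d = {..<n} \<times> {..<d}"

definition stub_sib :: "nat \<Rightarrow> stub \<Rightarrow> stub set" where
  "stub_sib d h = {fst h} \<times> {..<d}"

definition act_of :: "expl_state \<Rightarrow> stub set" where "act_of s = fst s"
definition uns_of :: "expl_state \<Rightarrow> stub set" where "uns_of s = fst (snd s)"
definition exp_of :: "expl_state \<Rightarrow> stub set" where "exp_of s = snd (snd s)"

definition init_state :: "nat \<Rightarrow> nat \<Rightarrow> nat \<Rightarrow> expl_state" where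
  "init_state n d V = (stub_sib d (V,0), stubs n d - stub_sib d (V,0), {})"

definition activate :: "nat \<Rightarrow> expl_state \<Rightarrow> stub \<Rightarrow> expl_state" where
  "activate d s e = (if act_of s = {}
      then (uns_of s \<inter> stub_sib d e, uns_of s - stub_sib d e, exp_of s) else s)"

text \<open>Cases (a.1)--(a.3) given e (active), the partner h and retention r.\<close>
definition upd_state :: "nat \<Rightarrow> expl_state \<Rightarrow> stub \<Rightarrow> stub \<Rightarrow> bool \<Rightarrow> expl_state" where
  "upd_state d s e h r =
     (let A = act_of s; U = uns_of s; E = exp_of s in
      if h \<in> U then
        (if r then ((A - {e}) \<union> (U \<inter> stub_sib d h - {h}), U - stub_sib d h, E \<union> {e, h})
         else (A - {e}, U - {h}, E \<union> {e, h}))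
      else (A - {e, h}, U, E \<union> {e, h}))"

definition expl_step :: "nat \<Rightarrow> nat \<Rightarrow> real \<Rightarrow> expl_state \<Rightarrow> stub \<Rightarrow> expl_state pmf" where
  "expl_step n d p s e =
     (if act_of s = {} \<and> uns_of s = {} then return_pmf s
      else (let s' = activate d s e in
        do { h \<leftarrow> pmf_of_set (stubs n d - (exp_of s' \<union> {e}));
             r \<leftarrow> bernoulli_pmf p;
             return_pmf (upd_state d s' e h r) }))"

text \<open>Law of the history (list of states after steps 0..t). The choice of e_t is made
 by an arbitrary rule sel depending on the whole history.\<close>
fun expl_traj :: "nat \<Rightarrow> nat \<Rightarrow> real \<Rightarrow> (expl_state list \<Rightarrow> stub) \<Rightarrow> nat \<Rightarrow> expl_state list pmf" where
  "expl_traj n d p sel 0 = map_pmf (\<lambda>V. [init_state n d V]) (pmf_of_set {..<n})"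
| "expl_traj n d p sel (Suc t) =
     bind_pmf (expl_traj n d p sel t)
       (\<lambda>xs. map_pmf (\<lambda>s. xs @ [s]) (expl_step n d p (last xs) (sel xs)))"

definition valid_sel :: "(expl_state list \<Rightarrow> stub) \<Rightarrow> bool" where
  "valid_sel sel \<longleftrightarrow> (\<forall>xs. (act_of (last xs) \<noteq> {} \<longrightarrow> sel xs \<in> act_of (last xs)) \<and>
       (act_of (last xs) = {} \<and> uns_of (last xs) \<noteq> {} \<longrightarrow> sel xs \<in> uns_of (last xs)))"

text \<open>Y_t = |A_t|; beyond the end of the history the (stopped) last state persists.\<close>
definition Yproc :: "expl_state list \<Rightarrow> nat \<Rightarrow> nat" where
  "Yproc xs t = card (act_of (if t < length xs then xs ! t else last xs))"

fun exc_time :: "(nat \<Rightarrow> nat) \<Rightarrow> nat \<Rightarrow> nat" where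
  "exc_time Y 0 = 0"
| "exc_time Y (Suc i) = (LEAST t. t \<ge> exc_time Y i + 1 \<and> Y t = 0)"

definition expl_process :: "nat \<Rightarrow> nat \<Rightarrow> real \<Rightarrow> (expl_state list \<Rightarrow> stub) \<Rightarrow> expl_state list pmf" where
  "expl_process n d p sel = expl_traj n d p sel (d * n div 2)"

definition perc_p :: "nat \<Rightarrow> real \<Rightarrow> nat \<Rightarrow> real" where
  "perc_p d lam n = (1 + lam * real n powr (-1/3)) / (real d - 1)"

definition T'_par :: "real \<Rightarrow> nat \<Rightarrow> nat" where
  "T'_par A n = nat \<lceil>real n powr (2/3) / A\<rceil>"

definition T_par :: "nat \<Rightarrow> real \<Rightarrow> nat \<Rightarrow> nat" where
  "T_par d A n = (d - 1) * T'_par A n"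

definition L_par :: "nat \<Rightarrow> real \<Rightarrow> nat \<Rightarrow> nat" where
  "L_par d A n = nat \<lfloor>real (d * n) / (4 * real (T_par d A n))\<rfloor>"

definition G_event :: "nat \<Rightarrow> real \<Rightarrow> real \<Rightarrow> nat \<Rightarrow> expl_state list set" where
  "G_event d A B n = {xs. real (exc_time (Yproc xs) (2 * L_par d A n - 1))
        \<le> B * real (L_par d A n) * sqrt (real (T_par d A n))}"

end

theory Submission
  imports Defs
begin

(*
  Chernoff bound for a Lyapunov potential of the exploration. Let K_t count the steps that start
  a new excursion and P_t the unseen stubs at vertices already reached (partial stubs). For a
  window m and kappa = 4 d (d - 1) n put

    Phi_t = |A_t| - d K_t - ((m - t) / kappa) P_t .

  Its increments are bounded by 6 d, and its conditional drift is at most eps - G / 2 with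
  G = (m - t - 1) / kappa and eps = |lam| n^(-1/3): pairing with a fresh vertex changes |A_t|
  by p (d - 1) - 1 <= eps on average and, when the edge is deleted, turns the d - 1 other stubs
  of that vertex into partial stubs; pairing with one of the P_t partial stubs loses
  1/(4 (d - 1)) on average, which pays for the decay of the coefficient of P_t; and the term
  -d K_t absorbs the stubs activated when an excursion starts. Hence
  P(Phi_m >= -2 d L) <= exp (- D^2 / (144 d^2 m)) with D ~ m^2 / (4 kappa). If t_(2L-1) > m
  then fewer than 2L - 1 excursions were started before time m, so Phi_m >= -2 d L.
  The window m = B L T^(1/2) has order B A^(1/2) n^(2/3), which makes D^2 / m of order A^(3/2).
*)

section \<open>Stubs and partially explored vertices\<close>

lemma mem_stub_sib_iff: "x \<in> stub_sib d h \<longleftrightarrow> fst x = fst h \<and> snd x < d"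
  by (cases x) (auto simp: stub_sib_def)

lemma mem_stubs_iff: "x \<in> stubs n d \<longleftrightarrow> fst x < n \<and> snd x < d"
  by (cases x) (auto simp: stubs_def)

lemma finite_stub_sib [simp]: "finite (stub_sib d h)"
  by (simp add: stub_sib_def)

lemma card_stub_sib [simp]: "card (stub_sib d h) = d"
  by (simp add: stub_sib_def card_cartesian_product)

lemma finite_stubs [simp]: "finite (stubs n d)"
  by (simp add: stubs_def)

lemma card_stubs [simp]: "card (stubs n d) = n * d"
  by (simp add: stubs_def card_cartesian_product)

lemma stub_sib_self: "h \<in> stubs n d \<Longrightarrow> h \<in> stub_sib d h"
  by (simp add: mem_stub_sib_iff mem_stubs_iff)

lemma stub_sib_subset_stubs: "h \<in> stubs n d \<Longrightarrow> stub_sib d h \<subseteq> stubs n d"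
  by (auto simp: mem_stub_sib_iff mem_stubs_iff)

lemma stub_sib_eq: "x \<in> stub_sib d h \<Longrightarrow> stub_sib d x = stub_sib d h"
  by (auto simp: stub_sib_def)

lemma stub_sib_disjoint: "snd x < d \<Longrightarrow> x \<notin> stub_sib d h \<Longrightarrow> stub_sib d x \<inter> stub_sib d h = {}"
  by (auto simp: mem_stub_sib_iff)

text \<open>Pairing with a partial stub activates fewer than \<open>d - 1\<close> new stubs; this is the
  source of the negative drift.\<close>

definition partial_stubs :: "nat \<Rightarrow> stub set \<Rightarrow> stub set" where
  "partial_stubs d U = {x\<in>U. \<not> stub_sib d x \<subseteq> U}"

lemma partial_stubs_subset: "partial_stubs d U \<subseteq> U"
  by (auto simp: partial_stubs_def)

lemma finite_partial_stubs: "U \<subseteq> stubs n d \<Longrightarrow> finite (partial_stubs d U)"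
  by (meson finite_stubs finite_subset partial_stubs_subset subset_trans)

lemma partial_stubs_Diff_stub_sib:
  assumes "U \<subseteq> stubs n d"
  shows "partial_stubs d (U - stub_sib d h) = partial_stubs d U - stub_sib d h"
proof -
  have "stub_sib d x \<subseteq> U - stub_sib d h \<longleftrightarrow> stub_sib d x \<subseteq> U"
    if "x \<in> U" "x \<notin> stub_sib d h" for x
  proof -
    have "snd x < d" using that assms by (auto simp: mem_stubs_iff)
    then have "stub_sib d x \<inter> stub_sib d h = {}" using stub_sib_disjoint that by blast
    then show ?thesis by blast
  qed
  then show ?thesis unfolding partial_stubs_def by blast
qed

lemma partial_stubs_disjoint_fresh:
  assumes "stub_sib d h \<subseteq> U"
  shows "partial_stubs d U \<inter> stub_sib d h = {}"
proof -
  have "stub_sib d x \<subseteq> U" if "x \<in> stub_sib d h" for x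
    using stub_sib_eq[OF that] assms by simp
  then show ?thesis unfolding partial_stubs_def by blast
qed

lemma partial_stubs_remove_fresh:
  assumes U: "U \<subseteq> stubs n d" and h: "h \<in> U" and fresh: "stub_sib d h \<subseteq> U"
  shows "partial_stubs d (U - {h}) = partial_stubs d U \<union> (stub_sib d h - {h})"
proof -
  have hh: "h \<in> stub_sib d h" using U h stub_sib_self by blast
  have other: "x \<in> partial_stubs d (U - {h}) \<longleftrightarrow> x \<in> partial_stubs d U"
    if "x \<in> U" "x \<notin> stub_sib d h" for x
  proof -
    have "snd x < d" using that U by (auto simp: mem_stubs_iff)
    then have "h \<notin> stub_sib d x" using stub_sib_disjoint that hh by blast
    then show ?thesis using that hh unfolding partial_stubs_def by blast
  qed
  have sibs: "x \<in> partial_stubs d (U - {h})" if "x \<in> stub_sib d h - {h}" for x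
  proof -
    have "stub_sib d x = stub_sib d h" using that stub_sib_eq by blast
    then show ?thesis using that fresh hh unfolding partial_stubs_def by blast
  qed
  show ?thesis
  proof (intro equalityI subsetI)
    fix x assume x: "x \<in> partial_stubs d (U - {h})"
    then have "x \<in> U" "x \<noteq> h" by (auto simp: partial_stubs_def)
    then show "x \<in> partial_stubs d U \<union> (stub_sib d h - {h})" using other x by blast
  next
    fix x assume "x \<in> partial_stubs d U \<union> (stub_sib d h - {h})"
    then show "x \<in> partial_stubs d (U - {h})"
    proof
      assume x: "x \<in> partial_stubs d U"
      then have "x \<in> U" "x \<notin> stub_sib d h"
        using partial_stubs_disjoint_fresh[OF fresh] by (auto simp: partial_stubs_def)
      then show ?thesis using other x by blast
    qed (rule sibs)
  qed
qed

lemma partial_stubs_remove_partial: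
  assumes U: "U \<subseteq> stubs n d" and h: "h \<in> U" and partial: "\<not> stub_sib d h \<subseteq> U"
  shows "partial_stubs d (U - {h}) = partial_stubs d U - {h}"
proof -
  have hh: "h \<in> stub_sib d h" using U h stub_sib_self by blast
  have "x \<in> partial_stubs d (U - {h}) \<longleftrightarrow> x \<in> partial_stubs d U" if "x \<in> U" "x \<noteq> h" for x
  proof (cases "x \<in> stub_sib d h")
    case True
    then show ?thesis using stub_sib_eq[OF True] that partial hh by (auto simp: partial_stubs_def)
  next
    case False
    have "snd x < d" using that U by (auto simp: mem_stubs_iff)
    then have "h \<notin> stub_sib d x" using stub_sib_disjoint False hh by blast
    then show ?thesis using that by (auto simp: partial_stubs_def)
  qed
  then show ?thesis by (auto simp: partial_stubs_def)
qed

section \<open>One pairing step\<close>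

lemma act_of_simp [simp]: "act_of (a, b, c) = a"
  and uns_of_simp [simp]: "uns_of (a, b, c) = b"
  and exp_of_simp [simp]: "exp_of (a, b, c) = c"
  by (simp_all add: act_of_def uns_of_def exp_of_def)

lemma state_eq: "s = (act_of s, uns_of s, exp_of s)"
  by (simp add: act_of_def uns_of_def exp_of_def)

lemma upd_state_unseen_retained:
  "h \<in> U \<Longrightarrow> upd_state d (A, U, E) e h True
     = ((A - {e}) \<union> (U \<inter> stub_sib d h - {h}), U - stub_sib d h, E \<union> {e, h})"
  and upd_state_unseen_deleted:
  "h \<in> U \<Longrightarrow> upd_state d (A, U, E) e h False = (A - {e}, U - {h}, E \<union> {e, h})"
  and upd_state_seen:
  "h \<notin> U \<Longrightarrow> upd_state d (A, U, E) e h r = (A - {e, h}, U, E \<union> {e, h})"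
  by (simp_all add: upd_state_def Let_def)

locale pairing_step =
  fixes n d :: nat and A U E :: "stub set" and e h :: stub
  assumes act_uns_disjoint: "A \<inter> U = {}" and e_act: "e \<in> A" and h_mem: "h \<in> (A \<union> U) - {e}"
    and uns_stubs: "U \<subseteq> stubs n d" and act_stubs: "A \<subseteq> stubs n d"
begin

abbreviation act_gain :: "bool \<Rightarrow> real" where
  "act_gain r \<equiv> real (card (act_of (upd_state d (A, U, E) e h r))) - real (card A)"

abbreviation partial_gain :: "bool \<Rightarrow> real" where
  "partial_gain r \<equiv> real (card (partial_stubs d (uns_of (upd_state d (A, U, E) e h r))))
     - real (card (partial_stubs d U))"

lemma finite_act: "finite A"
  using act_stubs by (rule finite_subset) simp

lemma finite_partial: "finite (partial_stubs d U)"
  using uns_stubs by (rule finite_partial_stubs)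

lemma h_stub: "h \<in> stubs n d"
  using h_mem uns_stubs act_stubs by blast

lemma h_sib: "h \<in> stub_sib d h"
  using h_stub by (rule stub_sib_self)

lemma d_ge_1: "d \<ge> 1"
  using h_sib by (auto simp: mem_stub_sib_iff)

lemma card_act_Diff_e: "real (card (A - {e})) = real (card A) - 1"
proof -
  have "card A \<ge> 1" using e_act finite_act by (metis One_nat_def Suc_leI card_gt_0_iff empty_iff)
  then show ?thesis using e_act finite_act by (simp add: of_nat_diff)
qed

lemma fresh_gains:
  assumes "h \<in> U" "stub_sib d h \<subseteq> U"
  shows "act_gain True = real d - 2" "partial_gain True = 0"
    "act_gain False = - 1" "partial_gain False = real d - 1"
proof -
  have "act_of (upd_state d (A, U, E) e h True) = (A - {e}) \<union> (stub_sib d h - {h})"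
    using assms by (simp add: upd_state_unseen_retained Int_absorb1)
  moreover have "(A - {e}) \<inter> (stub_sib d h - {h}) = {}" using act_uns_disjoint assms by blast
  then have "card ((A - {e}) \<union> (stub_sib d h - {h})) = card (A - {e}) + (d - 1)"
    using finite_act h_sib by (simp add: card_Un_disjoint)
  ultimately show "act_gain True = real d - 2"
    using card_act_Diff_e d_ge_1 by (simp add: of_nat_diff)
  have "partial_stubs d (U - stub_sib d h) = partial_stubs d U"
    using partial_stubs_Diff_stub_sib[OF uns_stubs] partial_stubs_disjoint_fresh[OF assms(2)] by blast
  then show "partial_gain True = 0"
    using assms by (simp add: upd_state_unseen_retained)
  show "act_gain False = - 1"
    using assms card_act_Diff_e by (simp add: upd_state_unseen_deleted)
  have "partial_stubs d U \<inter> (stub_sib d h - {h}) = {}"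
    using partial_stubs_disjoint_fresh[OF assms(2)] by blast
  then have "card (partial_stubs d U \<union> (stub_sib d h - {h})) = card (partial_stubs d U) + (d - 1)"
    using finite_partial h_sib by (simp add: card_Un_disjoint)
  then show "partial_gain False = real d - 1"
    using assms d_ge_1 partial_stubs_remove_fresh[OF uns_stubs assms]
    by (simp add: upd_state_unseen_deleted of_nat_diff)
qed

lemma partial_gains:
  assumes "h \<in> U" "\<not> stub_sib d h \<subseteq> U"
  shows "- 1 \<le> act_gain True" "act_gain True \<le> real d - 3"
    "- real d \<le> partial_gain True" "partial_gain True \<le> 0"
    "act_gain False = - 1" "partial_gain False = - 1"
proof -
  let ?N = "U \<inter> stub_sib d h - {h}"
  have "(A - {e}) \<inter> ?N = {}" using act_uns_disjoint by blast
  then have act: "real (card (act_of (upd_state d (A, U, E) e h True)))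
      = real (card (A - {e})) + real (card ?N)"
    using assms finite_act by (simp add: upd_state_unseen_retained card_Un_disjoint)
  have "U \<inter> stub_sib d h \<subset> stub_sib d h" using assms by blast
  then have "card (U \<inter> stub_sib d h) < card (stub_sib d h)" by (rule psubset_card_mono[OF finite_stub_sib])
  then have "card (U \<inter> stub_sib d h) < d" by simp
  moreover have "h \<in> U \<inter> stub_sib d h" using assms h_sib by blast
  then have "card ?N = card (U \<inter> stub_sib d h) - 1" "card (U \<inter> stub_sib d h) \<ge> 1"
    using card_gt_0_iff[of "U \<inter> stub_sib d h"] by auto
  ultimately have "card ?N + 2 \<le> d" by linarith
  then show "- 1 \<le> act_gain True" "act_gain True \<le> real d - 3"
    unfolding act card_act_Diff_e by linarith+
  have part: "partial_stubs d (uns_of (upd_state d (A, U, E) e h True))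
      = partial_stubs d U - stub_sib d h"
    using assms partial_stubs_Diff_stub_sib[OF uns_stubs] by (simp add: upd_state_unseen_retained)
  have "card (partial_stubs d U) - card (stub_sib d h) \<le> card (partial_stubs d U - stub_sib d h)"
    by (rule diff_card_le_card_Diff) simp
  then show "- real d \<le> partial_gain True" unfolding part by simp
  have "card (partial_stubs d U - stub_sib d h) \<le> card (partial_stubs d U)"
    using finite_partial by (rule card_mono) blast
  then show "partial_gain True \<le> 0" unfolding part by simp
  show "act_gain False = - 1"
    using assms card_act_Diff_e by (simp add: upd_state_unseen_deleted)
  have "h \<in> partial_stubs d U" using assms by (simp add: partial_stubs_def)
  then have "card (partial_stubs d U) \<ge> 1" "card (partial_stubs d U - {h}) = card (partial_stubs d U) - 1"
    using finite_partial card_gt_0_iff[of "partial_stubs d U"] by auto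
  then have "real (card (partial_stubs d U - {h})) = real (card (partial_stubs d U)) - 1"
    by (simp add: of_nat_diff)
  then show "partial_gain False = - 1"
    using assms partial_stubs_remove_partial[OF uns_stubs assms] by (simp add: upd_state_unseen_deleted)
qed

lemma active_partner_gains:
  assumes "h \<in> A"
  shows "act_gain r = - 2" "partial_gain r = 0"
proof -
  have "h \<notin> U" using assms act_uns_disjoint by blast
  have sub: "{e, h} \<subseteq> A" and two: "card {e, h} = 2" using e_act assms h_mem by auto
  have "card {e, h} \<le> card A" using card_mono[OF finite_act sub] .
  then have "real (card (A - {e, h})) = real (card A) - 2"
    using finite_act sub two by (simp add: card_Diff_subset of_nat_diff)
  then show "act_gain r = - 2" using \<open>h \<notin> U\<close> by (simp add: upd_state_seen)
  show "partial_gain r = 0" using \<open>h \<notin> U\<close> by (simp add: upd_state_seen)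
qed

end

definition pair_increment :: "nat \<Rightarrow> stub set \<Rightarrow> stub set \<Rightarrow> stub set \<Rightarrow> stub \<Rightarrow> real \<Rightarrow> stub \<Rightarrow> bool \<Rightarrow> real" where
  "pair_increment d A U E e G h r =
     real (card (act_of (upd_state d (A, U, E) e h r))) - real (card A)
     - G * (real (card (partial_stubs d (uns_of (upd_state d (A, U, E) e h r))))
            - real (card (partial_stubs d U)))"

definition near_critical :: "nat \<Rightarrow> real \<Rightarrow> real \<Rightarrow> bool" where
  "near_critical d p \<epsilon> \<longleftrightarrow> 0 \<le> p \<and> p \<le> 1 \<and> 0 \<le> \<epsilon> \<and> p * (real d - 1) - 1 \<le> \<epsilon>
     \<and> 1/2 \<le> (1 - p) * (real d - 1) \<and> p * (real d - 2) - 1 \<le> - 1 / (2 * (real d - 1))"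

lemma drift_coeff_le_one:
  assumes "d \<ge> 3" "0 \<le> G" "(real d + 1/2) * G \<le> 1 / (4 * (real d - 1))"
  shows "G \<le> 1"
proof -
  have "G \<le> (real d + 1/2) * G" using assms by (simp add: mult_le_cancel_right1)
  moreover have "1 / (4 * (real d - 1)) \<le> 1" using assms by (simp add: field_simps)
  ultimately show ?thesis using assms by linarith
qed

context pairing_step
begin

lemma pair_increment_abs_le:
  assumes "0 \<le> G" "G \<le> 1" "d \<ge> 3"
  shows "\<bar>pair_increment d A U E e G h r\<bar> \<le> 2 * real d"
proof -
  have "\<bar>act_gain r\<bar> \<le> real d \<and> \<bar>partial_gain r\<bar> \<le> real d"
  proof (cases "h \<in> U")
    case True
    then show ?thesis
      using fresh_gains[OF True] partial_gains[OF True] d_ge_1 by (cases "stub_sib d h \<subseteq> U"; cases r) auto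
  next
    case False
    then have "h \<in> A" using h_mem by blast
    then show ?thesis using active_partner_gains[OF \<open>h \<in> A\<close>] assms by auto
  qed
  moreover have "\<bar>G * partial_gain r\<bar> \<le> 1 * real d"
    unfolding abs_mult using assms calculation by (intro mult_mono) auto
  ultimately show ?thesis unfolding pair_increment_def by linarith
qed

lemma pair_increment_mean_partial_le:
  assumes crit: "near_critical d p \<epsilon>" and G: "0 \<le> G" "(real d + 1/2) * G \<le> 1 / (4 * (real d - 1))"
    and d: "d \<ge> 3" and h: "h \<in> U" "\<not> stub_sib d h \<subseteq> U"
  shows "p * pair_increment d A U E e G h True + (1 - p) * pair_increment d A U E e G h False
     \<le> \<epsilon> - G/2 - 1 / (4 * (real d - 1))"
proof -
  from crit have p: "0 \<le> p" "p \<le> 1" "0 \<le> \<epsilon>" "p * (real d - 2) - 1 \<le> - 1 / (2 * (real d - 1))"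
    by (simp_all add: near_critical_def)
  let ?I = "pair_increment d A U E e G h"
  note gains = partial_gains[OF h]
  have "?I True \<le> real d - 3 + G * real d"
    using gains(2,3) G mult_left_mono[of "- partial_gain True" "real d" G]
    unfolding pair_increment_def by linarith
  then have "p * ?I True + (1 - p) * ?I False \<le> p * (real d - 3 + G * real d) + (1 - p) * (G - 1)"
    using mult_left_mono[OF _ p(1)] unfolding pair_increment_def gains by simp
  also have "\<dots> = (p * (real d - 2) - 1) + G * (p * (real d - 1) + 1)"
    by (simp add: algebra_simps)
  also have "\<dots> \<le> - 1 / (2 * (real d - 1)) + G * real d"
  proof -
    have "p * (real d - 1) \<le> 1 * (real d - 1)" using p d by (intro mult_right_mono) auto
    then have "G * (p * (real d - 1) + 1) \<le> G * real d" using G by (intro mult_left_mono) auto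
    then show ?thesis using p(4) by linarith
  qed
  also have "\<dots> \<le> \<epsilon> - G/2 - 1 / (4 * (real d - 1))"
  proof -
    define X where "X = 1 / (4 * (real d - 1))"
    have "G * real d + G/2 \<le> X" using G(2) by (simp add: X_def algebra_simps)
    moreover have "- 1 / (2 * (real d - 1)) = - 2 * X" using d by (simp add: X_def field_simps)
    ultimately show ?thesis using p(3) unfolding X_def[symmetric] by linarith
  qed
  finally show ?thesis .
qed

lemma pair_increment_mean_le:
  assumes crit: "near_critical d p \<epsilon>" and G: "0 \<le> G" "(real d + 1/2) * G \<le> 1 / (4 * (real d - 1))"
    and d: "d \<ge> 3"
  shows "p * pair_increment d A U E e G h True + (1 - p) * pair_increment d A U E e G h False
     \<le> \<epsilon> - G/2 - (if h \<in> partial_stubs d U then 1 / (4 * (real d - 1)) else 0)"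
proof -
  from crit have p: "0 \<le> p" "p \<le> 1" "0 \<le> \<epsilon>" "p * (real d - 1) - 1 \<le> \<epsilon>"
    "1/2 \<le> (1 - p) * (real d - 1)"
    by (simp_all add: near_critical_def)
  let ?I = "pair_increment d A U E e G h"
  show ?thesis
  proof (cases "h \<in> U")
    case True
    show ?thesis
    proof (cases "stub_sib d h \<subseteq> U")
      case fresh: True
      note gains = fresh_gains[OF True fresh]
      have "p * ?I True + (1 - p) * ?I False = p * (real d - 1) - 1 - G * ((1 - p) * (real d - 1))"
        unfolding pair_increment_def gains by (simp add: algebra_simps)
      moreover have "G * (1/2) \<le> G * ((1 - p) * (real d - 1))" using p G by (intro mult_left_mono)
      moreover have "h \<notin> partial_stubs d U" using fresh by (simp add: partial_stubs_def)
      ultimately show ?thesis using p by simp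
    next
      case partial: False
      then have "h \<in> partial_stubs d U" using True by (simp add: partial_stubs_def)
      then show ?thesis using pair_increment_mean_partial_le[OF crit G d True partial] by simp
    qed
  next
    case False
    then have "h \<in> A" using h_mem by blast
    then have "?I r = - 2" for r
      unfolding pair_increment_def using active_partner_gains[OF \<open>h \<in> A\<close>] by simp
    moreover have "h \<notin> partial_stubs d U" using False by (simp add: partial_stubs_def)
    ultimately show ?thesis using drift_coeff_le_one[OF d G] p by (simp add: algebra_simps)
  qed
qed

end

definition stub_partition :: "nat \<Rightarrow> nat \<Rightarrow> expl_state \<Rightarrow> bool" where
  "stub_partition n d s \<longleftrightarrow>
     act_of s \<inter> uns_of s = {} \<and> act_of s \<inter> exp_of s = {} \<and> uns_of s \<inter> exp_of s = {}
     \<and> act_of s \<union> uns_of s \<union> exp_of s = stubs n d"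

definition valid_state :: "nat \<Rightarrow> nat \<Rightarrow> nat \<Rightarrow> expl_state \<Rightarrow> bool" where
  "valid_state n d t s \<longleftrightarrow> stub_partition n d s \<and> card (exp_of s) = 2 * t"

definition admissible_stub :: "expl_state \<Rightarrow> stub \<Rightarrow> bool" where
  "admissible_stub s e \<longleftrightarrow>
     (act_of s \<noteq> {} \<longrightarrow> e \<in> act_of s) \<and> (act_of s = {} \<and> uns_of s \<noteq> {} \<longrightarrow> e \<in> uns_of s)"

lemma admissible_stub_sel: "valid_sel sel \<Longrightarrow> admissible_stub (last xs) (sel xs)"
  by (simp add: valid_sel_def admissible_stub_def)

lemma activate_nonempty: "act_of s \<noteq> {} \<Longrightarrow> activate d s e = s"
  and activate_empty: "act_of s = {} \<Longrightarrow>
     activate d s e = (uns_of s \<inter> stub_sib d e, uns_of s - stub_sib d e, exp_of s)"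
  by (simp_all add: activate_def)

lemma activate_facts:
  assumes P: "stub_partition n d s" and e: "admissible_stub s e" and live: "act_of s \<union> uns_of s \<noteq> {}"
  shows "stub_partition n d (activate d s e)" "exp_of (activate d s e) = exp_of s"
    "e \<in> act_of (activate d s e)"
    "act_of (activate d s e) \<union> uns_of (activate d s e) = act_of s \<union> uns_of s"
proof -
  have "stub_partition n d (activate d s e) \<and> exp_of (activate d s e) = exp_of s
    \<and> e \<in> act_of (activate d s e) \<and> act_of (activate d s e) \<union> uns_of (activate d s e) = act_of s \<union> uns_of s"
  proof (cases "act_of s = {}")
    case True
    then have eU: "e \<in> uns_of s" using e live by (auto simp: admissible_stub_def)
    then have "e \<in> stubs n d" using P by (auto simp: stub_partition_def)
    then have "e \<in> stub_sib d e" by (rule stub_sib_self)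
    then show ?thesis using True eU P unfolding activate_empty[OF True] stub_partition_def by auto
  next
    case False
    then show ?thesis using e P by (simp add: activate_nonempty admissible_stub_def)
  qed
  then show "stub_partition n d (activate d s e)" "exp_of (activate d s e) = exp_of s"
    "e \<in> act_of (activate d s e)"
    "act_of (activate d s e) \<union> uns_of (activate d s e) = act_of s \<union> uns_of s" by auto
qed

lemma upd_state_partition:
  assumes P: "stub_partition n d (A, U, E)" and e: "e \<in> A" and h: "h \<in> (A \<union> U) - {e}"
  shows "stub_partition n d (upd_state d (A, U, E) e h r)"
    "exp_of (upd_state d (A, U, E) e h r) = E \<union> {e, h}"
proof -
  have hs: "h \<in> stubs n d" using P h by (auto simp: stub_partition_def)
  then have sib: "stub_sib d h \<subseteq> stubs n d" "h \<in> stub_sib d h"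
    by (simp_all add: stub_sib_subset_stubs stub_sib_self)
  have "stub_partition n d (upd_state d (A, U, E) e h r) \<and> exp_of (upd_state d (A, U, E) e h r) = E \<union> {e, h}"
  proof (cases "h \<in> U")
    case True
    then show ?thesis
      using upd_state_unseen_retained[OF True] upd_state_unseen_deleted[OF True] P e h sib
      unfolding stub_partition_def by (cases r) auto
  next
    case False
    then show ?thesis using upd_state_seen[OF False] P e h unfolding stub_partition_def by auto
  qed
  then show "stub_partition n d (upd_state d (A, U, E) e h r)"
    "exp_of (upd_state d (A, U, E) e h r) = E \<union> {e, h}" by auto
qed

lemma card_live_stubs:
  assumes "stub_partition n d s"
  shows "card (act_of s \<union> uns_of s) = n * d - card (exp_of s)"
proof -
  have fin: "finite (act_of s \<union> uns_of s)" "finite (exp_of s)"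
    using assms unfolding stub_partition_def by (metis finite_Un finite_stubs)+
  have "card (act_of s \<union> uns_of s \<union> exp_of s) = card (act_of s \<union> uns_of s) + card (exp_of s)"
    using assms fin by (intro card_Un_disjoint) (auto simp: stub_partition_def)
  then show ?thesis using assms by (simp add: stub_partition_def)
qed

lemma expl_step_eq_bind:
  assumes "\<not> (act_of s = {} \<and> uns_of s = {})"
  shows "expl_step n d p s e = bind_pmf (pmf_of_set (stubs n d - (exp_of (activate d s e) \<union> {e})))
     (\<lambda>h. bind_pmf (bernoulli_pmf p) (\<lambda>r. return_pmf (upd_state d (activate d s e) e h r)))"
  using assms unfolding expl_step_def Let_def by (auto split: if_split)

text \<open>Before the last step at least two stubs are unexplored, as \<open>d n\<close> is even.\<close>

lemma expl_step_partners:
  assumes I: "valid_state n d t s" and e: "admissible_stub s e" and t: "2 * t < d * n"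
    and ev: "even (d * n)"
  defines "S \<equiv> stubs n d - (exp_of (activate d s e) \<union> {e})"
  shows "\<not> (act_of s = {} \<and> uns_of s = {})" "stub_partition n d (activate d s e)"
    "e \<in> act_of (activate d s e)" "exp_of (activate d s e) = exp_of s"
    "S = (act_of (activate d s e) \<union> uns_of (activate d s e)) - {e}"
    "finite S" "S \<noteq> {}" "card S \<le> n * d"
proof -
  have P: "stub_partition n d s" and E: "card (exp_of s) = 2 * t"
    using I by (auto simp: valid_state_def)
  have live: "card (act_of s \<union> uns_of s) = n * d - 2 * t" using card_live_stubs[OF P] E by simp
  have "even (n * d - 2 * t)" "n * d - 2 * t > 0" using ev t by (simp_all add: mult.commute)
  then have two: "card (act_of s \<union> uns_of s) \<ge> 2" unfolding live by presburger
  then have "act_of s \<union> uns_of s \<noteq> {}" by auto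
  then show "\<not> (act_of s = {} \<and> uns_of s = {})" by auto
  note act = activate_facts[OF P e \<open>act_of s \<union> uns_of s \<noteq> {}\<close>]
  show P': "stub_partition n d (activate d s e)" "e \<in> act_of (activate d s e)"
    "exp_of (activate d s e) = exp_of s" using act by auto
  show S: "S = (act_of (activate d s e) \<union> uns_of (activate d s e)) - {e}"
    using P' unfolding S_def stub_partition_def by auto
  show "finite S" unfolding S_def by simp
  have "e \<in> act_of s \<union> uns_of s" using act(3,4) by blast
  then have "card S = card (act_of s \<union> uns_of s) - 1"
    unfolding S act(4) by (simp add: card_Diff_singleton)
  then show "S \<noteq> {}" using two by auto
  show "card S \<le> n * d" unfolding S_def using card_mono[of "stubs n d"] by simp
qed

lemma valid_state_expl_step:
  assumes I: "valid_state n d t s" and e: "admissible_stub s e" and t: "2 * t < d * n"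
    and ev: "even (d * n)" and x: "x \<in> set_pmf (expl_step n d p s e)"
  shows "valid_state n d (Suc t) x"
proof -
  note S = expl_step_partners[OF I e t ev]
  define s' where "s' = activate d s e"
  from x S(6,7) obtain h r where h: "h \<in> (act_of s' \<union> uns_of s') - {e}"
    and x_eq: "x = upd_state d (act_of s', uns_of s', exp_of s') e h r"
    unfolding expl_step_eq_bind[OF S(1)] s'_def[symmetric] S(5)[folded s'_def]
    using state_eq[of s'] by auto
  have P': "stub_partition n d (act_of s', uns_of s', exp_of s')"
    using S(2) state_eq[of s'] by (simp add: s'_def)
  have e': "e \<in> act_of s'" using S(3) by (simp add: s'_def)
  note upd = upd_state_partition[OF P' e' h, of r]
  have "e \<notin> exp_of s'" "h \<notin> exp_of s'" "e \<noteq> h" using P' e' h unfolding stub_partition_def by auto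
  moreover have "finite (exp_of s')"
    using P' unfolding stub_partition_def by (metis exp_of_simp finite_Un finite_stubs)
  ultimately have "card (exp_of s' \<union> {e, h}) = card (exp_of s') + 2" by (simp add: card_insert_if)
  moreover have "card (exp_of s') = 2 * t" using S(4) I by (simp add: s'_def valid_state_def)
  ultimately show ?thesis using upd x_eq by (simp add: valid_state_def)
qed

section \<open>The moment generating function of one step\<close>

lemma exp_le_one_plus_sq:
  fixes x :: real
  assumes "\<bar>x\<bar> \<le> 1"
  shows "exp x \<le> 1 + x + x\<^sup>2"
proof (cases "x \<ge> 0")
  case True
  then show ?thesis using exp_bound[of x] assms by simp
next
  case False
  have "exp x * (1 - x) \<le> exp x * exp (- x)"
    using exp_ge_add_one_self[of "- x"] by (intro mult_left_mono) auto
  then have "exp x * (1 - x) \<le> 1" by (simp add: exp_minus field_simps)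
  moreover have "(1 + x + x\<^sup>2) * (1 - x) = 1 - x ^ 3"
    by (simp add: algebra_simps power2_eq_square power3_eq_cube)
  moreover have "x ^ 3 \<le> 0" using False by (simp add: power3_eq_cube mult_nonneg_nonpos)
  ultimately have "exp x * (1 - x) \<le> (1 + x + x\<^sup>2) * (1 - x)" by linarith
  then show ?thesis using False by (simp add: mult_le_cancel_right)
qed

lemma two_point_exp_mean_le:
  fixes p \<theta> M X Y :: real
  assumes p: "0 \<le> p" "p \<le> 1" and \<theta>: "0 \<le> \<theta>" "\<theta> * M \<le> 1"
    and X: "\<bar>X\<bar> \<le> M" and Y: "\<bar>Y\<bar> \<le> M"
  shows "p * exp (\<theta> * X) + (1 - p) * exp (\<theta> * Y) \<le> 1 + \<theta> * (p * X + (1 - p) * Y) + (\<theta> * M)\<^sup>2"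
proof -
  have bound: "exp (\<theta> * Z) \<le> 1 + \<theta> * Z + (\<theta> * M)\<^sup>2" if "\<bar>Z\<bar> \<le> M" for Z
  proof -
    have small: "\<bar>\<theta> * Z\<bar> \<le> \<theta> * M" using that \<theta> by (simp add: abs_mult mult_left_mono)
    then have "exp (\<theta> * Z) \<le> 1 + \<theta> * Z + (\<theta> * Z)\<^sup>2" using \<theta> by (intro exp_le_one_plus_sq) linarith
    moreover have "\<bar>\<theta> * Z\<bar>\<^sup>2 \<le> (\<theta> * M)\<^sup>2" using small by (intro power_mono) auto
    ultimately show ?thesis by simp
  qed
  have "p * exp (\<theta> * X) \<le> p * (1 + \<theta> * X + (\<theta> * M)\<^sup>2)"
    using bound[OF X] p(1) by (rule mult_left_mono)
  moreover have "(1 - p) * exp (\<theta> * Y) \<le> (1 - p) * (1 + \<theta> * Y + (\<theta> * M)\<^sup>2)"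
    using bound[OF Y] p by (intro mult_left_mono) auto
  moreover have "p * (1 + \<theta> * X + (\<theta> * M)\<^sup>2) + (1 - p) * (1 + \<theta> * Y + (\<theta> * M)\<^sup>2)
      = 1 + \<theta> * (p * X + (1 - p) * Y) + (\<theta> * M)\<^sup>2"
    by (simp add: algebra_simps)
  ultimately show ?thesis by linarith
qed

lemma (in pairing_step) exp_pair_increment_mean_le:
  assumes crit: "near_critical d p \<epsilon>" and G: "0 \<le> G" "(real d + 1/2) * G \<le> 1 / (4 * (real d - 1))"
    and d: "d \<ge> 3" and \<theta>: "0 \<le> \<theta>" "\<theta> * (6 * real d) \<le> 1" and a: "\<bar>a\<bar> \<le> 2 * real d + 1"
  shows "p * exp (\<theta> * (pair_increment d A U E e G h True + a))
      + (1 - p) * exp (\<theta> * (pair_increment d A U E e G h False + a))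
    \<le> 1 + (\<theta> * (6 * real d))\<^sup>2 + \<theta> * a + \<theta> * (\<epsilon> - G/2)
      - \<theta> * (if h \<in> partial_stubs d U then 1 / (4 * (real d - 1)) else 0)"
proof -
  let ?I = "pair_increment d A U E e G h"
  have p: "0 \<le> p" "p \<le> 1" using crit by (simp_all add: near_critical_def)
  have "\<bar>?I r + a\<bar> \<le> 6 * real d" for r
    using pair_increment_abs_le[OF G(1) drift_coeff_le_one[OF d G] d, of r] a d by linarith
  then have "p * exp (\<theta> * (?I True + a)) + (1 - p) * exp (\<theta> * (?I False + a))
      \<le> 1 + \<theta> * (p * (?I True + a) + (1 - p) * (?I False + a)) + (\<theta> * (6 * real d))\<^sup>2"
    using p \<theta> by (intro two_point_exp_mean_le) auto
  also have "p * (?I True + a) + (1 - p) * (?I False + a) = (p * ?I True + (1 - p) * ?I False) + a"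
    by (simp add: algebra_simps)
  also have "\<theta> * \<dots> \<le> \<theta> * ((\<epsilon> - G/2 - (if h \<in> partial_stubs d U then 1 / (4 * (real d - 1)) else 0)) + a)"
    using pair_increment_mean_le[OF crit G d] \<theta> by (intro mult_left_mono) auto
  finally show ?thesis by (simp add: algebra_simps)
qed

lemma nn_integral_uniform_bernoulli:
  fixes F :: "'b \<Rightarrow> real"
  assumes S: "finite S" "S \<noteq> {}" and p: "0 \<le> p" "p \<le> 1" and F: "\<And>x. F x \<ge> 0"
  shows "(\<integral>\<^sup>+x. ennreal (F x)
        \<partial>(bind_pmf (pmf_of_set S) (\<lambda>h. bind_pmf (bernoulli_pmf p) (\<lambda>r. return_pmf (k h r)))))
     = ennreal ((\<Sum>h\<in>S. p * F (k h True) + (1 - p) * F (k h False)) / real (card S))"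
proof -
  have two_point: "ennreal (F (k h True)) * ennreal p + ennreal (F (k h False)) * ennreal (1 - p)
      = ennreal (p * F (k h True) + (1 - p) * F (k h False))" for h
  proof -
    have "0 \<le> F (k h True)" "0 \<le> F (k h False)" "0 \<le> 1 - p" using F p by auto
    then show ?thesis using p
      by (simp add: ennreal_plus[symmetric] ennreal_mult[symmetric] mult.commute del: ennreal_plus)
  qed
  have "(\<integral>\<^sup>+x. ennreal (F x)
        \<partial>(bind_pmf (pmf_of_set S) (\<lambda>h. bind_pmf (bernoulli_pmf p) (\<lambda>r. return_pmf (k h r)))))
     = (\<integral>\<^sup>+h. ennreal (p * F (k h True) + (1 - p) * F (k h False)) \<partial>pmf_of_set S)"
    using p F by (simp add: two_point)
  also have "\<dots> = (\<Sum>h\<in>S. ennreal (p * F (k h True) + (1 - p) * F (k h False))) / card S"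
    using S by (simp add: nn_integral_pmf_of_set)
  also have "\<dots> = ennreal (\<Sum>h\<in>S. p * F (k h True) + (1 - p) * F (k h False)) / ennreal (real (card S))"
    using p F by (subst sum_ennreal)
      (auto intro!: add_nonneg_nonneg mult_nonneg_nonneg simp: ennreal_of_nat_eq_real_of_nat)
  also have "\<dots> = ennreal ((\<Sum>h\<in>S. p * F (k h True) + (1 - p) * F (k h False)) / real (card S))"
    using S by (subst divide_ennreal)
      (auto simp: card_gt_0_iff intro!: sum_nonneg add_nonneg_nonneg mult_nonneg_nonneg p F)
  finally show ?thesis .
qed

definition partial_count :: "nat \<Rightarrow> expl_state \<Rightarrow> nat" where
  "partial_count d s = card (partial_stubs d (uns_of s))"

definition drift_scale :: "nat \<Rightarrow> nat \<Rightarrow> real" where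
  "drift_scale d n = 4 * real d * (real d - 1) * real n"

lemma drift_scale_pos: "d \<ge> 3 \<Longrightarrow> n > 0 \<Longrightarrow> drift_scale d n > 0"
  by (simp add: drift_scale_def)

lemma drift_scale_ge:
  assumes "d \<ge> 3"
  shows "4 * (real d - 1) * real (n * d) \<le> drift_scale d n"
  by (simp add: drift_scale_def algebra_simps)

lemma partial_count_le: "stub_partition n d s \<Longrightarrow> partial_count d s \<le> n * d"
  unfolding partial_count_def stub_partition_def
  by (metis card_mono card_stubs finite_stubs le_supI1 le_supI2 partial_stubs_subset order_trans)

text \<open>One step of the potential of the next section, during which the coefficient of \<open>|P|\<close>
  moves from \<open>-(G + 1/\<kappa>)\<close> to \<open>-G\<close>.\<close>

definition potential_increment :: "nat \<Rightarrow> nat \<Rightarrow> real \<Rightarrow> expl_state \<Rightarrow> expl_state \<Rightarrow> real" where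
  "potential_increment d n G s x =
     real (card (act_of x)) - real (card (act_of s)) - real d * (if act_of s = {} then 1 else 0)
     - G * real (partial_count d x) + (G + 1 / drift_scale d n) * real (partial_count d s)"

definition activation_increment :: "nat \<Rightarrow> nat \<Rightarrow> real \<Rightarrow> expl_state \<Rightarrow> stub \<Rightarrow> real" where
  "activation_increment d n G s e =
     real (card (act_of (activate d s e))) - real (card (act_of s)) - real d * (if act_of s = {} then 1 else 0)
     - G * (real (partial_count d (activate d s e)) - real (partial_count d s))
     + real (partial_count d s) / drift_scale d n"

lemma potential_increment_split:
  "potential_increment d n G s (upd_state d (activate d s e) e h r)
     = pair_increment d (act_of (activate d s e)) (uns_of (activate d s e)) (exp_of (activate d s e)) e G h r
       + activation_increment d n G s e"
  using state_eq[of "activate d s e"]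
  unfolding potential_increment_def activation_increment_def pair_increment_def partial_count_def
  by (simp add: algebra_simps)

lemma activation_gains:
  assumes P: "stub_partition n d s" and e: "admissible_stub s e" and live: "act_of s \<union> uns_of s \<noteq> {}"
  defines "da \<equiv> real (card (act_of (activate d s e))) - real (card (act_of s))
      - real d * (if act_of s = {} then 1 else 0)"
    and "dP \<equiv> real (partial_count d (activate d s e)) - real (partial_count d s)"
  shows "- real d \<le> da" "da \<le> 0" "- real d \<le> dP" "dP \<le> 0" "dP = 0 \<or> da \<le> - 1"
proof -
  have "- real d \<le> da \<and> da \<le> 0 \<and> - real d \<le> dP \<and> dP \<le> 0 \<and> (dP = 0 \<or> da \<le> - 1)"
  proof (cases "act_of s = {}")
    case False
    then show ?thesis by (simp add: da_def dP_def activate_nonempty)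
  next
    case empty: True
    define s' where "s' = activate d s e"
    have eU: "e \<in> uns_of s" using e live empty by (auto simp: admissible_stub_def)
    have U: "uns_of s \<subseteq> stubs n d" using P unfolding stub_partition_def by blast
    have s': "s' = (uns_of s \<inter> stub_sib d e, uns_of s - stub_sib d e, exp_of s)"
      using empty by (simp add: s'_def activate_empty)
    have part: "partial_stubs d (uns_of s') = partial_stubs d (uns_of s) - stub_sib d e"
      using partial_stubs_Diff_stub_sib[OF U] s' by simp
    show ?thesis
    proof (cases "stub_sib d e \<subseteq> uns_of s")
      case fresh: True
      have "act_of s' = stub_sib d e" using s' fresh by auto
      moreover have "partial_stubs d (uns_of s') = partial_stubs d (uns_of s)"
        using part partial_stubs_disjoint_fresh[OF fresh] by blast
      ultimately show ?thesis using empty by (simp add: da_def dP_def s'_def partial_count_def)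
    next
      case partial: False
      let ?P = "partial_stubs d (uns_of s)"
      have sub: "act_of s' \<subset> stub_sib d e" using s' partial by auto
      then have "card (act_of s') < card (stub_sib d e)" by (rule psubset_card_mono[OF finite_stub_sib])
      then have act_lt: "real (card (act_of s')) \<le> real d - 1" by simp
      have "e \<in> stub_sib d e" using eU U stub_sib_self by blast
      then have "e \<in> act_of s'" using s' eU by simp
      then have "card (act_of s') \<ge> 1" using sub finite_stub_sib
        by (metis One_nat_def Suc_leI card_gt_0_iff empty_iff finite_subset psubset_imp_subset)
      then have act_ge: "1 \<le> real (card (act_of s'))" by simp
      have dP: "dP = real (card (?P - stub_sib d e)) - real (card ?P)"
        using part by (simp add: dP_def s'_def[symmetric] partial_count_def)
      have "card (?P - stub_sib d e) \<le> card ?P"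
        using finite_partial_stubs[OF U] by (rule card_mono) blast
      moreover have "card ?P - card (stub_sib d e) \<le> card (?P - stub_sib d e)"
        by (rule diff_card_le_card_Diff) simp
      then have "card ?P \<le> card (?P - stub_sib d e) + d" by simp
      ultimately have "dP \<le> 0" "- real d \<le> dP" unfolding dP by linarith+
      moreover have "da = real (card (act_of s')) - real d" using empty by (simp add: da_def s'_def)
      ultimately show ?thesis using act_lt act_ge by simp
    qed
  qed
  then show "- real d \<le> da" "da \<le> 0" "- real d \<le> dP" "dP \<le> 0" "dP = 0 \<or> da \<le> - 1" by auto
qed

lemma activation_increment_bounds:
  assumes P: "stub_partition n d s" and e: "admissible_stub s e" and live: "act_of s \<union> uns_of s \<noteq> {}"
    and d: "d \<ge> 3" and n: "n > 0" and G: "0 \<le> G" "G \<le> 1" "G * real d + real d / drift_scale d n \<le> 1"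
  shows "activation_increment d n G s e \<le> real (partial_count d (activate d s e)) / drift_scale d n"
    "\<bar>activation_increment d n G s e\<bar> \<le> 2 * real d + 1"
proof -
  define \<kappa> where "\<kappa> = drift_scale d n"
  define P0 where "P0 = real (partial_count d s)"
  define da where "da = real (card (act_of (activate d s e))) - real (card (act_of s))
      - real d * (if act_of s = {} then 1 else 0)"
  define dP where "dP = real (partial_count d (activate d s e)) - P0"
  note gains = activation_gains[OF P e live, folded P0_def, folded da_def dP_def]
  have "1 * real (n * d) \<le> 4 * (real d - 1) * real (n * d)" using d by (intro mult_right_mono) auto
  then have \<kappa>: "\<kappa> > 0" "real (n * d) \<le> \<kappa>"
    using drift_scale_pos[OF d n] drift_scale_ge[OF d, of n] unfolding \<kappa>_def by linarith+
  have "real (partial_count d s) \<le> real (n * d)" using partial_count_le[OF P] by (simp only: of_nat_le_iff)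
  then have P0: "0 \<le> P0 / \<kappa>" "P0 / \<kappa> \<le> 1" using \<kappa> unfolding P0_def by auto
  have inc: "activation_increment d n G s e = da - G * dP + P0 / \<kappa>"
    by (simp add: activation_increment_def da_def dP_def P0_def \<kappa>_def)
  have "da - G * dP + P0 / \<kappa> \<le> (P0 + dP) / \<kappa>"
  proof (cases "dP = 0")
    case False
    then have "da \<le> - 1" using gains(5) by simp
    moreover have "(G + 1 / \<kappa>) * (- dP) \<le> (G + 1 / \<kappa>) * real d"
      using gains(3) G \<kappa> by (intro mult_left_mono) auto
    then have "- (G * dP) - dP / \<kappa> \<le> G * real d + real d / \<kappa>" by (simp add: distrib_right)
    moreover have "(P0 + dP) / \<kappa> = P0 / \<kappa> + dP / \<kappa>" by (simp add: add_divide_distrib)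
    ultimately show ?thesis using G(3) unfolding \<kappa>_def[symmetric] by linarith
  qed (use gains(2) in simp)
  then show "activation_increment d n G s e \<le> real (partial_count d (activate d s e)) / drift_scale d n"
    unfolding inc by (simp add: dP_def \<kappa>_def)
  have "\<bar>G * dP\<bar> \<le> 1 * real d"
    unfolding abs_mult using G gains(3,4) by (intro mult_mono) auto
  then show "\<bar>activation_increment d n G s e\<bar> \<le> 2 * real d + 1"
    unfolding inc using gains(1,2) P0 by (simp add: abs_le_iff)
qed

lemma average_le_of_bonus:
  fixes f b :: "'a \<Rightarrow> real"
  assumes S: "finite S" "S \<noteq> {}" and f: "\<And>h. h \<in> S \<Longrightarrow> f h \<le> X + a - b h"
    and a: "a \<le> (\<Sum>h\<in>S. b h) / real (card S)"
  shows "(\<Sum>h\<in>S. f h) / real (card S) \<le> X"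
proof -
  have card: "0 < real (card S)" using S by (simp add: card_gt_0_iff)
  have "(\<Sum>h\<in>S. f h) \<le> (\<Sum>h\<in>S. X + a - b h)" using f by (rule sum_mono)
  also have "\<dots> = real (card S) * (X + a) - (\<Sum>h\<in>S. b h)" by (simp add: sum_subtractf)
  finally have "(\<Sum>h\<in>S. f h) / real (card S) \<le> (real (card S) * (X + a) - (\<Sum>h\<in>S. b h)) / real (card S)"
    using card by (intro divide_right_mono) auto
  also have "\<dots> = X + a - (\<Sum>h\<in>S. b h) / real (card S)" using card by (simp add: field_simps)
  finally show ?thesis using a by linarith
qed

text \<open>The bonus \<open>1/(4(d-1))\<close> for a partial partner, earned with probability
  \<open>|P|/|S| \<ge> 4(d-1)|P|/\<kappa>\<close>, pays for the term \<open>|P|/\<kappa>\<close> of the activation part.\<close>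

lemma nn_integral_exp_potential_increment_le:
  assumes I: "valid_state n d t s" and e: "admissible_stub s e" and t: "2 * t < d * n"
    and ev: "even (d * n)" and d: "d \<ge> 3" and crit: "near_critical d p \<epsilon>"
    and G: "0 \<le> G" "(real d + 1/2) * G \<le> 1 / (4 * (real d - 1))"
      "G * real d + real d / drift_scale d n \<le> 1"
    and \<theta>: "0 \<le> \<theta>" "\<theta> * (6 * real d) \<le> 1"
  shows "(\<integral>\<^sup>+x. ennreal (exp (\<theta> * potential_increment d n G s x)) \<partial>expl_step n d p s e)
      \<le> ennreal (exp (\<theta> * (\<epsilon> - G/2) + (\<theta> * (6 * real d))\<^sup>2))"
proof -
  note step = expl_step_partners[OF I e t ev]
  define s' where "s' = activate d s e"
  define S where "S = stubs n d - (exp_of s' \<union> {e})"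
  define a where "a = activation_increment d n G s e"
  define P where "P = real (partial_count d s')"
  define c where "c = (\<theta> * (6 * real d))\<^sup>2"
  define bonus where
    "bonus h = \<theta> * (if h \<in> partial_stubs d (uns_of s') then 1 / (4 * (real d - 1)) else 0)" for h
  define mean where "mean h = p * exp (\<theta> * potential_increment d n G s (upd_state d s' e h True))
    + (1 - p) * exp (\<theta> * potential_increment d n G s (upd_state d s' e h False))" for h
  have p: "0 \<le> p" "p \<le> 1" using crit by (simp_all add: near_critical_def)
  have n: "n > 0" using t by (cases n) auto
  have S: "S = (act_of s' \<union> uns_of s') - {e}" "finite S" "S \<noteq> {}" "card S \<le> n * d"
    using step(5-8) by (simp_all add: S_def s'_def)
  have P': "stub_partition n d s'" and e': "e \<in> act_of s'" using step(2,3) by (simp_all add: s'_def)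
  have \<kappa>: "drift_scale d n > 0" using drift_scale_pos[OF d n] .
  have live: "act_of s \<union> uns_of s \<noteq> {}" using step(1) by auto
  note a_bounds = activation_increment_bounds[OF _ e live d n G(1) drift_coeff_le_one[OF d G(1,2)] G(3)]
  have a_le: "a \<le> P / drift_scale d n" and a_abs: "\<bar>a\<bar> \<le> 2 * real d + 1"
    using a_bounds I by (simp_all add: a_def P_def s'_def valid_state_def)
  have mean_le: "mean h \<le> (1 + c + \<theta> * (\<epsilon> - G/2)) + \<theta> * a - bonus h" if "h \<in> S" for h
  proof -
    have "pairing_step n d (act_of s') (uns_of s') e h"
      using P' e' that S(1) unfolding stub_partition_def by unfold_locales auto
    note mean_pair =
      pairing_step.exp_pair_increment_mean_le[OF this crit G(1,2) d \<theta> a_abs, where E = "exp_of s'"]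
    show ?thesis using mean_pair
      unfolding mean_def bonus_def c_def a_def s'_def potential_increment_split by linarith
  qed
  have "partial_stubs d (uns_of s') \<subseteq> S" using partial_stubs_subset S(1) e' P'
    unfolding stub_partition_def by blast
  then have bonus_sum: "(\<Sum>h\<in>S. bonus h) = \<theta> * (P / (4 * (real d - 1)))"
    unfolding bonus_def using S(2)
    by (simp add: sum_distrib_left[symmetric] sum.If_cases Int_absorb1 P_def partial_count_def)
  have "\<theta> * a \<le> (\<Sum>h\<in>S. bonus h) / real (card S)"
  proof -
    have "real (card S) \<le> real (n * d)" using S(4) by (simp only: of_nat_le_iff)
    then have "4 * (real d - 1) * real (card S) \<le> 4 * (real d - 1) * real (n * d)"
      using d by (intro mult_left_mono) auto
    then have "4 * (real d - 1) * real (card S) \<le> drift_scale d n" using drift_scale_ge[OF d, of n] by linarith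
    then have "P / drift_scale d n \<le> P / (4 * (real d - 1) * real (card S))"
      using S(2,3) d \<kappa> by (intro divide_left_mono) (auto simp: P_def card_gt_0_iff)
    then have "a \<le> P / (4 * (real d - 1) * real (card S))" using a_le by linarith
    then have "\<theta> * a \<le> \<theta> * (P / (4 * (real d - 1) * real (card S)))" using \<theta> by (intro mult_left_mono) auto
    then show ?thesis unfolding bonus_sum by simp
  qed
  then have "(\<Sum>h\<in>S. mean h) / real (card S) \<le> 1 + (\<theta> * (\<epsilon> - G/2) + c)"
    using average_le_of_bonus[where f = mean and b = bonus, OF S(2,3) mean_le] by simp
  then have "ennreal ((\<Sum>h\<in>S. mean h) / real (card S)) \<le> ennreal (exp (\<theta> * (\<epsilon> - G/2) + c))"
    using exp_ge_add_one_self[of "\<theta> * (\<epsilon> - G/2) + c"] by (intro ennreal_leI) linarith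
  moreover have "(\<integral>\<^sup>+x. ennreal (exp (\<theta> * potential_increment d n G s x)) \<partial>expl_step n d p s e)
      = ennreal ((\<Sum>h\<in>S. mean h) / real (card S))"
    unfolding expl_step_eq_bind[OF step(1)] s'_def[symmetric] S_def[symmetric] mean_def
    by (rule nn_integral_uniform_bernoulli[OF S(2,3) p]) simp
  ultimately show ?thesis by (simp add: c_def)
qed

section \<open>The potential along a trajectory\<close>

definition restarts :: "expl_state list \<Rightarrow> nat" where
  "restarts xs = length (filter (\<lambda>s. act_of s = {}) (butlast xs))"

definition potential :: "nat \<Rightarrow> nat \<Rightarrow> nat \<Rightarrow> expl_state list \<Rightarrow> real" where
  "potential d n m xs = real (card (act_of (last xs))) - real d * real (restarts xs)
     + (real (length xs - 1) - real m) / drift_scale d n * real (partial_count d (last xs))"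

lemma length_expl_traj: "xs \<in> set_pmf (expl_traj n d p sel t) \<Longrightarrow> length xs = Suc t"
  by (induction t arbitrary: xs) auto

lemma restarts_snoc:
  assumes "xs \<noteq> []"
  shows "restarts (xs @ [x]) = restarts xs + (if act_of (last xs) = {} then 1 else 0)"
proof -
  have "xs = butlast xs @ [last xs]" using assms by simp
  then have "filter (\<lambda>s. act_of s = {}) xs
      = filter (\<lambda>s. act_of s = {}) (butlast xs) @ filter (\<lambda>s. act_of s = {}) [last xs]"
    by (metis filter_append)
  then show ?thesis by (simp add: restarts_def)
qed

lemma potential_snoc:
  assumes "length xs = Suc t" and "drift_scale d n \<noteq> 0"
  shows "potential d n m (xs @ [x])
    = potential d n m xs + potential_increment d n ((real m - real t - 1) / drift_scale d n) (last xs) x"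
proof -
  have "xs \<noteq> []" using assms by auto
  then show ?thesis using assms restarts_snoc[of xs x]
    unfolding potential_def potential_increment_def by (simp add: field_simps)
qed

lemma init_state_facts:
  assumes "V < n" "d \<ge> 1"
  shows "valid_state n d 0 (init_state n d V)" "act_of (init_state n d V) \<noteq> {}"
    "card (act_of (init_state n d V)) = d" "partial_count d (init_state n d V) = 0"
proof -
  have "stub_sib d (V, 0) \<subseteq> stubs n d" using assms by (auto simp: mem_stub_sib_iff mem_stubs_iff)
  then show "valid_state n d 0 (init_state n d V)"
    by (auto simp: valid_state_def stub_partition_def init_state_def)
  show "act_of (init_state n d V) \<noteq> {}"
    using assms by (auto simp: init_state_def stub_sib_def lessThan_empty_iff)
  show "card (act_of (init_state n d V)) = d" by (simp add: init_state_def)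
  have "stub_sib d x \<subseteq> stubs n d - stub_sib d (V, 0)" if "x \<in> stubs n d - stub_sib d (V, 0)" for x
    using that by (auto simp: mem_stub_sib_iff mem_stubs_iff)
  then have "partial_stubs d (stubs n d - stub_sib d (V, 0)) = {}"
    unfolding partial_stubs_def by blast
  then show "partial_count d (init_state n d V) = 0" by (simp add: partial_count_def init_state_def)
qed

lemma expl_traj_valid:
  assumes sel: "valid_sel sel" and n: "n > 0" and d: "d \<ge> 1" and ev: "even (d * n)"
  shows "xs \<in> set_pmf (expl_traj n d p sel t) \<Longrightarrow> 2 * t \<le> d * n
    \<Longrightarrow> valid_state n d t (last xs) \<and> act_of (hd xs) \<noteq> {}"
proof (induction t arbitrary: xs)
  case 0
  have "set_pmf (pmf_of_set {..<n}) = {..<n}" using n by (intro set_pmf_of_set) auto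
  then obtain V where "V < n" "xs = [init_state n d V]" using 0 by auto
  then show ?case using init_state_facts[OF _ d] by simp
next
  case (Suc t)
  from Suc.prems(1) obtain ys x where ys: "ys \<in> set_pmf (expl_traj n d p sel t)"
    and x: "x \<in> set_pmf (expl_step n d p (last ys) (sel ys))" and xs: "xs = ys @ [x]" by auto
  have t: "2 * t < d * n" using Suc.prems(2) by simp
  have IH: "valid_state n d t (last ys) \<and> act_of (hd ys) \<noteq> {}" using Suc.IH[OF ys] t by simp
  then have "valid_state n d (Suc t) x"
    using valid_state_expl_step[OF _ admissible_stub_sel[OF sel] t ev x] by blast
  moreover have "ys \<noteq> []" using length_expl_traj[OF ys] by auto
  ultimately show ?case using xs IH by simp
qed

lemma drift_coeff_small:
  assumes d: "d \<ge> 3" and n: "n > 0" and m: "2 * m \<le> n" and G: "0 \<le> G" "G \<le> real m / drift_scale d n"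
  shows "(real d + 1/2) * G \<le> 1 / (4 * (real d - 1))" "G * real d + real d / drift_scale d n \<le> 1"
proof -
  define \<kappa> where "\<kappa> = drift_scale d n"
  have \<kappa>: "\<kappa> > 0" using drift_scale_pos[OF d n] by (simp add: \<kappa>_def)
  have "real m \<le> real n / 2" using m by simp
  then have G': "G \<le> real n / 2 / \<kappa>" using G(2) \<kappa> unfolding \<kappa>_def[symmetric]
    by (meson divide_right_mono less_imp_le order_trans)
  then have "(real d + 1/2) * G \<le> (real d + 1/2) * (real n / 2) / \<kappa>"
    using d by (auto intro: mult_left_mono[of _ _ "real d + 1/2", THEN order_trans])
  also have "\<dots> \<le> real d * real n / \<kappa>"
  proof -
    have "1 * real n \<le> real d * real n" using d by (intro mult_right_mono) auto
    then show ?thesis using \<kappa> by (intro divide_right_mono) (auto simp: algebra_simps)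
  qed
  also have "\<dots> = 1 / (4 * (real d - 1))" using d n by (simp add: \<kappa>_def drift_scale_def field_simps)
  finally show "(real d + 1/2) * G \<le> 1 / (4 * (real d - 1))" .
  have "G * real d \<le> real n / 2 / \<kappa> * real d" using G' by (intro mult_right_mono) auto
  moreover have "real n / 2 / \<kappa> * real d + real d / \<kappa> = (real n / 2 + 1) * real d / \<kappa>"
    using \<kappa> by (simp add: field_simps)
  ultimately have "G * real d + real d / \<kappa> \<le> (real n / 2 + 1) * real d / \<kappa>" by linarith
  also have "\<dots> \<le> \<kappa> / \<kappa>"
  proof (rule divide_right_mono)
    have "(real n / 2 + 1) * real d \<le> (8 * real n) * real d" using n by (intro mult_right_mono) auto
    moreover have "8 * (real n * real d) \<le> (4 * (real d - 1)) * (real n * real d)"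
      using d by (intro mult_right_mono) auto
    ultimately show "(real n / 2 + 1) * real d \<le> \<kappa>" by (simp add: \<kappa>_def drift_scale_def algebra_simps)
  qed (use \<kappa> in simp)
  finally have "G * real d + real d / \<kappa> \<le> 1" using \<kappa> by simp
  then show "G * real d + real d / drift_scale d n \<le> 1" using \<kappa> by (simp add: \<kappa>_def)
qed

lemma nn_integral_exp_potential_snoc_le:
  assumes sel: "valid_sel sel" and n: "n > 0" and d: "d \<ge> 3" and ev: "even (d * n)"
    and crit: "near_critical d p \<epsilon>" and m: "2 * m \<le> n" and t: "t < m"
    and \<theta>: "0 \<le> \<theta>" "\<theta> * (6 * real d) \<le> 1" and ys: "ys \<in> set_pmf (expl_traj n d p sel t)"
  shows "(\<integral>\<^sup>+x. ennreal (exp (\<theta> * potential d n m (ys @ [x]))) \<partial>expl_step n d p (last ys) (sel ys))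
    \<le> ennreal (exp (\<theta> * potential d n m ys))
      * ennreal (exp (\<theta> * (\<epsilon> - (real m - real t - 1) / drift_scale d n / 2) + (\<theta> * (6 * real d))\<^sup>2))"
proof -
  define G where "G = (real m - real t - 1) / drift_scale d n"
  have "n \<le> d * n" using d by simp
  then have t': "2 * t < d * n" using t m by linarith
  have \<kappa>: "drift_scale d n > 0" using drift_scale_pos[OF d n] .
  have G: "0 \<le> G" "G \<le> real m / drift_scale d n" using t \<kappa> by (simp_all add: G_def divide_right_mono)
  have len: "length ys = Suc t" using length_expl_traj[OF ys] .
  have I: "valid_state n d t (last ys)" using expl_traj_valid[OF sel n _ ev ys] d t' by simp
  have "(\<integral>\<^sup>+x. ennreal (exp (\<theta> * potential d n m (ys @ [x]))) \<partial>expl_step n d p (last ys) (sel ys))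
    = ennreal (exp (\<theta> * potential d n m ys))
      * (\<integral>\<^sup>+x. ennreal (exp (\<theta> * potential_increment d n G (last ys) x)) \<partial>expl_step n d p (last ys) (sel ys))"
    using potential_snoc[OF len] \<kappa>
    by (simp add: G_def distrib_left exp_add ennreal_mult nn_integral_cmult)
  also have "\<dots> \<le> ennreal (exp (\<theta> * potential d n m ys)) * ennreal (exp (\<theta> * (\<epsilon> - G / 2) + (\<theta> * (6 * real d))\<^sup>2))"
    by (intro mult_left_mono nn_integral_exp_potential_increment_le[OF I admissible_stub_sel[OF sel]
          t' ev d crit G(1) drift_coeff_small[OF d n m G] \<theta>]) simp
  finally show ?thesis by (simp add: G_def)
qed

lemma nn_integral_exp_potential_le:
  assumes sel: "valid_sel sel" and n: "n > 0" and d: "d \<ge> 3" and ev: "even (d * n)"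
    and crit: "near_critical d p \<epsilon>" and m: "2 * m \<le> n"
    and \<theta>: "0 \<le> \<theta>" "\<theta> * (6 * real d) \<le> 1"
  shows "t \<le> m \<Longrightarrow> (\<integral>\<^sup>+xs. ennreal (exp (\<theta> * potential d n m xs)) \<partial>expl_traj n d p sel t)
     \<le> ennreal (exp (\<theta> * real d + (\<Sum>i<t. \<theta> * (\<epsilon> - (real m - real i - 1) / drift_scale d n / 2)
                                         + (\<theta> * (6 * real d))\<^sup>2)))"
proof (induction t)
  case 0
  have V: "set_pmf (pmf_of_set {..<n}) = {..<n}" using n by (intro set_pmf_of_set) auto
  have "potential d n m [init_state n d V] = real d" if "V < n" for V
    using init_state_facts[OF that] d by (simp add: potential_def restarts_def)
  then have "(\<integral>\<^sup>+V. ennreal (exp (\<theta> * potential d n m [init_state n d V])) \<partial>pmf_of_set {..<n})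
      = (\<integral>\<^sup>+V. ennreal (exp (\<theta> * real d)) \<partial>pmf_of_set {..<n})"
    using V by (intro nn_integral_cong_AE AE_pmfI) simp
  then show ?case by simp
next
  case (Suc t)
  define C where "C = \<theta> * (\<epsilon> - (real m - real t - 1) / drift_scale d n / 2) + (\<theta> * (6 * real d))\<^sup>2"
  have t: "t < m" using Suc.prems by simp
  have "(\<integral>\<^sup>+xs. ennreal (exp (\<theta> * potential d n m xs)) \<partial>expl_traj n d p sel (Suc t))
      = (\<integral>\<^sup>+ys. (\<integral>\<^sup>+x. ennreal (exp (\<theta> * potential d n m (ys @ [x])))
           \<partial>expl_step n d p (last ys) (sel ys)) \<partial>expl_traj n d p sel t)"
    by simp
  also have "\<dots> \<le> (\<integral>\<^sup>+ys. ennreal (exp (\<theta> * potential d n m ys)) * ennreal (exp C) \<partial>expl_traj n d p sel t)"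
    unfolding C_def
    by (intro nn_integral_mono_AE AE_pmfI nn_integral_exp_potential_snoc_le[OF sel n d ev crit m t \<theta>])
  also have "\<dots> = (\<integral>\<^sup>+ys. ennreal (exp (\<theta> * potential d n m ys)) \<partial>expl_traj n d p sel t) * ennreal (exp C)"
    by (rule nn_integral_multc) simp
  also have "\<dots> \<le> ennreal (exp (\<theta> * real d + (\<Sum>i<t. \<theta> * (\<epsilon> - (real m - real i - 1) / drift_scale d n / 2)
                                         + (\<theta> * (6 * real d))\<^sup>2))) * ennreal (exp C)"
    using Suc.IH t by (intro mult_right_mono) auto
  also have "\<dots> = ennreal (exp (\<theta> * real d + (\<Sum>i<Suc t. \<theta> * (\<epsilon> - (real m - real i - 1) / drift_scale d n / 2)
                                         + (\<theta> * (6 * real d))\<^sup>2)))"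
    by (simp add: C_def exp_add ennreal_mult[symmetric] add.assoc)
  finally show ?case .
qed

lemma map_pmf_take_expl_traj:
  "map_pmf (take (Suc m)) (expl_traj n d p sel (m + k)) = expl_traj n d p sel m"
proof (induction k)
  case 0
  show ?case by (simp add: map_pmf_idI length_expl_traj)
next
  case (Suc k)
  have "map_pmf (take (Suc m)) (expl_traj n d p sel (m + Suc k))
      = bind_pmf (expl_traj n d p sel (m + k)) (\<lambda>xs. return_pmf (take (Suc m) xs))"
    by (simp add: map_bind_pmf map_pmf_comp length_expl_traj cong: bind_pmf_cong)
  then show ?case using Suc.IH by (simp add: map_pmf_def)
qed

section \<open>Late excursions\<close>

text \<open>Each \<open>t_(i+1)\<close> is at most the \<open>(i+1)\<close>-st zero of \<open>Y\<close> in \<open>Z\<close>, as long as there is one.\<close>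

lemma exc_time_le_zeros:
  assumes fin: "finite Z" and Z: "\<And>z. z \<in> Z \<Longrightarrow> Y z = 0 \<and> 1 \<le> z \<and> z \<le> m"
  shows "i \<le> card Z \<Longrightarrow> exc_time Y i \<le> m \<and> card Z \<le> card {z\<in>Z. exc_time Y i < z} + i"
proof (induction i)
  case 0
  have "{z\<in>Z. 0 < z} = Z" using Z by force
  then show ?case by simp
next
  case (Suc i)
  let ?t = "exc_time Y i" and ?t' = "exc_time Y (Suc i)"
  have IH: "card Z \<le> card {z\<in>Z. ?t < z} + i" using Suc by simp
  then have "card {z\<in>Z. ?t < z} \<ge> 1" using Suc.prems by simp
  then have "{z\<in>Z. ?t < z} \<noteq> {}" by (metis card.empty not_one_le_zero)
  then obtain z where z: "z \<in> Z" "?t < z" by blast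
  have t': "?t' = (LEAST t. t \<ge> ?t + 1 \<and> Y t = 0)" by simp
  have "?t' \<le> z" unfolding t' using z Z by (intro Least_le) auto
  then have "?t' \<le> m" using Z z by fastforce
  have "{z\<in>Z. ?t < z} \<subseteq> insert ?t' {z\<in>Z. ?t' < z}"
  proof
    fix w assume w: "w \<in> {z\<in>Z. ?t < z}"
    then have "w \<ge> ?t + 1 \<and> Y w = 0" using Z by auto
    then have "\<not> w < ?t'" unfolding t' using not_less_Least by blast
    then show "w \<in> insert ?t' {z\<in>Z. ?t' < z}" using w by auto
  qed
  then have "card {z\<in>Z. ?t < z} \<le> card (insert ?t' {z\<in>Z. ?t' < z})"
    by (rule card_mono[rotated]) (simp add: fin)
  also have "\<dots> \<le> card {z\<in>Z. ?t' < z} + 1" by (simp add: card_insert_if fin)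
  finally show ?case using IH \<open>?t' \<le> m\<close> by linarith
qed

lemma potential_ge_of_late_excursion:
  assumes sel: "valid_sel sel" and n: "n > 0" and d: "d \<ge> 1" and ev: "even (d * n)"
    and xs: "xs \<in> set_pmf (expl_traj n d p sel (d * n div 2))" and m: "m \<le> d * n div 2"
    and L: "L \<ge> 1" and late: "real m < real (exc_time (Yproc xs) (2 * L - 1))"
    and \<kappa>: "drift_scale d n \<noteq> 0"
  shows "potential d n m (take (Suc m) xs) \<ge> - (2 * real d * real L)"
proof -
  have len: "length xs = Suc (d * n div 2)" using length_expl_traj[OF xs] .
  have hd: "act_of (hd xs) \<noteq> {}" using expl_traj_valid[OF sel n d ev xs] by simp
  define ys where "ys = take (Suc m) xs"
  define Z where "Z = {i. i < m \<and> act_of (xs ! i) = {}}"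
  have "butlast ys = take m xs" using len m by (simp add: ys_def butlast_take)
  then have "restarts ys = length (filter (\<lambda>s. act_of s = {}) (take m xs))"
    by (simp add: restarts_def)
  also have "\<dots> = card {i. i < length (take m xs) \<and> act_of (take m xs ! i) = {}}"
    by (rule length_filter_conv_card)
  also have "{i. i < length (take m xs) \<and> act_of (take m xs ! i) = {}} = Z"
    using len m by (auto simp: Z_def)
  finally have restarts: "restarts ys = card Z" .
  have zeros: "Yproc xs z = 0 \<and> 1 \<le> z \<and> z \<le> m" if "z \<in> Z" for z
  proof -
    have z: "z < m" "act_of (xs ! z) = {}" using that by (auto simp: Z_def)
    have "z < length xs" using z len m by simp
    moreover have "xs \<noteq> []" using len by auto
    then have "xs ! 0 = hd xs" by (simp add: hd_conv_nth)
    ultimately show ?thesis using z hd by (cases z) (auto simp: Yproc_def)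
  qed
  have "card Z < 2 * L - 1"
  proof (rule ccontr)
    assume "\<not> card Z < 2 * L - 1"
    then have "exc_time (Yproc xs) (2 * L - 1) \<le> m"
      using exc_time_le_zeros[of Z "Yproc xs" m "2 * L - 1"] zeros by (simp add: Z_def)
    then show False using late by simp
  qed
  then have "real d * real (restarts ys) \<le> real d * (2 * real L)"
    unfolding restarts using L by (intro mult_left_mono) auto
  moreover have "potential d n m ys = real (card (act_of (last ys))) - real d * real (restarts ys)"
    using len m \<kappa> by (simp add: potential_def ys_def)
  ultimately show ?thesis unfolding ys_def[symmetric] by simp
qed

lemma measure_pmf_ge_le_exp_moment:
  fixes M :: "'a pmf"
  assumes \<theta>: "\<theta> > 0" and moment: "(\<integral>\<^sup>+x. ennreal (exp (\<theta> * f x)) \<partial>M) \<le> ennreal (exp b)"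
  shows "measure_pmf.prob M {x. f x \<ge> a} \<le> exp (b - \<theta> * a)"
proof -
  have "emeasure M {x\<in>UNIV. f x \<ge> a}
      \<le> ennreal (exp (- \<theta> * a)) * (\<integral>\<^sup>+x. ennreal (exp (\<theta> * f x)) * indicator UNIV x \<partial>M)"
    using \<theta> by (intro Chernoff_ineq_nn_integral_ge) auto
  also have "\<dots> \<le> ennreal (exp (- \<theta> * a)) * ennreal (exp b)"
    using moment by (intro mult_left_mono) auto
  also have "\<dots> = ennreal (exp (b - \<theta> * a))"
    by (simp add: ennreal_mult[symmetric] exp_add[symmetric])
  finally show ?thesis by (simp add: measure_pmf.emeasure_eq_measure)
qed

lemma sum_countdown: "(\<Sum>i<m. real m - real i - 1) = real m * (real m - 1) / 2"
proof -
  have "(\<Sum>i<m. real m - real i - 1) = (\<Sum>i<m. real (m - Suc i))"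
    by (intro sum.cong) (auto simp: of_nat_diff)
  also have "\<dots> = (\<Sum>i<m. real i)" by (rule sum.nat_diff_reindex)
  also have "\<dots> = real m * (real m - 1) / 2" by (induction m) (auto simp: field_simps)
  finally show ?thesis .
qed

lemma prob_late_excursion_le_exp_moment:
  assumes sel: "valid_sel sel" and n: "n > 0" and d: "d \<ge> 3" and ev: "even (d * n)"
    and crit: "near_critical d p \<epsilon>" and m: "2 * m \<le> n" and L: "L \<ge> 1" and mb: "real m \<le> b"
    and \<theta>: "0 < \<theta>" "\<theta> * (6 * real d) \<le> 1"
  shows "measure_pmf.prob (expl_traj n d p sel (d * n div 2)) {xs. \<not> real (exc_time (Yproc xs) (2 * L - 1)) \<le> b}
     \<le> exp (- \<theta> * (real m * (real m - 1) / (4 * drift_scale d n) - real m * \<epsilon> - 2 * real d * real L - real d)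
            + real m * (\<theta> * (6 * real d))\<^sup>2)"
proof -
  define \<kappa> where "\<kappa> = drift_scale d n"
  define M where "M = expl_traj n d p sel (d * n div 2)"
  define late where "late = {xs. \<not> real (exc_time (Yproc xs) (2 * L - 1)) \<le> b}"
  have \<kappa>: "\<kappa> > 0" using drift_scale_pos[OF d n] by (simp add: \<kappa>_def)
  have "n \<le> d * n" using d by simp
  then have m': "m \<le> d * n div 2" using m by linarith
  have "measure_pmf.prob M late = measure_pmf.prob M (late \<inter> set_pmf M)"
    by (simp add: measure_Int_set_pmf)
  also have "\<dots> \<le> measure_pmf.prob M {xs. potential d n m (take (Suc m) xs) \<ge> - (2 * real d * real L)}"
    using potential_ge_of_late_excursion[OF sel n _ ev _ m' L] mb d \<kappa>
    by (intro measure_pmf.finite_measure_mono) (auto simp: M_def late_def \<kappa>_def)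
  also have "\<dots> = measure_pmf.prob (map_pmf (take (Suc m)) M) {ys. potential d n m ys \<ge> - (2 * real d * real L)}"
    by simp
  also have "map_pmf (take (Suc m)) M = expl_traj n d p sel m"
    using map_pmf_take_expl_traj[of m n d p sel "d * n div 2 - m"] m' by (simp add: M_def)
  also have "measure_pmf.prob (expl_traj n d p sel m) {ys. potential d n m ys \<ge> - (2 * real d * real L)}
    \<le> exp (\<theta> * real d + (\<Sum>i<m. \<theta> * (\<epsilon> - (real m - real i - 1) / \<kappa> / 2) + (\<theta> * (6 * real d))\<^sup>2)
      - \<theta> * (- (2 * real d * real L)))"
    using nn_integral_exp_potential_le[OF sel n d ev crit m less_imp_le[OF \<theta>(1)] \<theta>(2) order_refl] \<theta>(1)
    unfolding \<kappa>_def by (rule measure_pmf_ge_le_exp_moment[rotated])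
  also have "(\<Sum>i<m. \<theta> * (\<epsilon> - (real m - real i - 1) / \<kappa> / 2) + (\<theta> * (6 * real d))\<^sup>2)
      = (\<Sum>i<m. (\<theta> * \<epsilon> + (\<theta> * (6 * real d))\<^sup>2) - \<theta> / (2 * \<kappa>) * (real m - real i - 1))"
    using \<kappa> by (intro sum.cong) (auto simp: field_simps)
  also have "\<dots> = real m * (\<theta> * \<epsilon> + (\<theta> * (6 * real d))\<^sup>2) - \<theta> / (2 * \<kappa>) * (\<Sum>i<m. real m - real i - 1)"
    using sum_subtractf[of "\<lambda>_. \<theta> * \<epsilon> + (\<theta> * (6 * real d))\<^sup>2" "\<lambda>i. \<theta> / (2 * \<kappa>) * (real m - real i - 1)" "{..<m}"]
    by (simp only: sum_distrib_left[symmetric] sum_constant card_lessThan)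
  finally show ?thesis
    unfolding sum_countdown M_def late_def \<kappa>_def[symmetric] using \<kappa> by (simp add: field_simps)
qed

text \<open>The choice \<open>\<theta> = D / (2 m (6d)\<^sup>2)\<close> minimises the exponent \<open>-\<theta> D + m \<theta>\<^sup>2 (6d)\<^sup>2\<close>.\<close>

lemma prob_late_excursion_le:
  assumes sel: "valid_sel sel" and n: "n > 0" and d: "d \<ge> 3" and ev: "even (d * n)"
    and crit: "near_critical d p \<epsilon>" and m: "2 * m \<le> n" "m \<ge> 1" and L: "L \<ge> 1" and mb: "real m \<le> b"
    and D: "D = real m * (real m - 1) / (4 * drift_scale d n) - real m * \<epsilon> - 2 * real d * real L - real d"
    and D_pos: "D > 0"
  shows "measure_pmf.prob (expl_traj n d p sel (d * n div 2)) {xs. \<not> real (exc_time (Yproc xs) (2 * L - 1)) \<le> b}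
     \<le> exp (- (D\<^sup>2 / (4 * real m * (6 * real d)\<^sup>2)))"
proof -
  define \<kappa> where "\<kappa> = drift_scale d n"
  define M where "M = 6 * real d"
  define \<theta> where "\<theta> = D / (2 * real m * M\<^sup>2)"
  have M: "M > 0" using d by (simp add: M_def)
  have m_pos: "real m > 0" using m by simp
  have \<kappa>: "\<kappa> > 0" using drift_scale_pos[OF d n] by (simp add: \<kappa>_def)
  have "real m \<le> real n" using m by simp
  also have "real n \<le> \<kappa>"
  proof -
    have "1 * 1 \<le> 4 * real d * (real d - 1)" using d by (intro mult_mono) auto
    then show ?thesis
      using mult_right_mono[of 1 "4 * real d * (real d - 1)" "real n"] by (simp add: \<kappa>_def drift_scale_def)
  qed
  finally have m_le: "real m \<le> \<kappa>" .
  have "real m * (real m - 1) / (4 * \<kappa>) \<le> real m * \<kappa> / (4 * \<kappa>)"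
    using m_le m_pos \<kappa> by (intro divide_right_mono mult_left_mono) auto
  also have "\<dots> = real m / 4" using \<kappa> by simp
  finally have "real m * (real m - 1) / (4 * \<kappa>) \<le> real m / 4" .
  moreover have "0 \<le> real m * \<epsilon>" using crit by (simp add: near_critical_def)
  ultimately have "D \<le> real m / 4"
    unfolding D \<kappa>_def[symmetric] using mult_nonneg_nonneg[of "real d" "real L"] by linarith
  then have "\<theta> * M \<le> 1 / (8 * M)"
    using m_pos M by (simp add: \<theta>_def power2_eq_square field_simps)
  also have "\<dots> \<le> 1" using M d by (simp add: M_def field_simps)
  finally have \<theta>: "0 < \<theta>" "\<theta> * (6 * real d) \<le> 1" using D_pos m_pos M by (simp_all add: \<theta>_def M_def)
  have "- \<theta> * D + real m * (\<theta> * M)\<^sup>2 = - (D\<^sup>2 / (4 * real m * M\<^sup>2))"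
    using m_pos M by (simp add: \<theta>_def power2_eq_square field_simps)
  then show ?thesis
    using prob_late_excursion_le_exp_moment[OF sel n d ev crit m(1) L mb \<theta>] by (simp add: D M_def)
qed

section \<open>The choice of parameters\<close>

lemma nat_floor_bounds:
  fixes y :: real
  assumes "1 \<le> y"
  shows "y / 2 \<le> real (nat \<lfloor>y\<rfloor>)" "real (nat \<lfloor>y\<rfloor>) \<le> y" "1 \<le> nat \<lfloor>y\<rfloor>"
proof -
  have "1 \<le> \<lfloor>y\<rfloor>" using assms by (simp add: le_floor_iff)
  moreover have "y - 1 < real_of_int \<lfloor>y\<rfloor>" by linarith
  ultimately show "y / 2 \<le> real (nat \<lfloor>y\<rfloor>)" "real (nat \<lfloor>y\<rfloor>) \<le> y" "1 \<le> nat \<lfloor>y\<rfloor>"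
    by linarith+
qed

lemma sixth_root_powr:
  fixes z :: real
  assumes "0 < z"
  shows "(z ^ 6) powr (real k / 6) = z ^ k"
proof -
  have "z ^ 6 = z powr 6" using powr_realpow[OF assms, of 6] by simp
  then have "(z ^ 6) powr (real k / 6) = z powr real k" by (simp add: powr_powr)
  then show ?thesis using powr_realpow[OF assms] by simp
qed

lemma excursion_scale_bounds:
  fixes A z :: real
  assumes d: "d \<ge> 3" and z: "0 < z" "8 \<le> z\<^sup>2" and n: "real n = z ^ 6" and A: "1 \<le> A" "A \<le> z ^ 4"
  shows "z ^ 4 / A \<le> real (T_par d A n)" "real (T_par d A n) \<le> 2 * real d * (z ^ 4 / A)"
    "1 \<le> L_par d A n" "real d * z ^ 6 / 8 \<le> real (L_par d A n) * real (T_par d A n)"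
    "real (L_par d A n) * real (T_par d A n) \<le> real d * z ^ 6 / 4"
proof -
  define q where "q = z ^ 4 / A"
  define T where "T = real (T_par d A n)"
  have q: "1 \<le> q" using A z by (simp add: q_def)
  have "real n powr (2/3) = z ^ 4" using sixth_root_powr[OF z(1), of 4] n by simp
  then have T': "real (T'_par A n) = real_of_int \<lceil>q\<rceil>" using q by (simp add: T'_par_def q_def)
  have T_eq: "T = (real d - 1) * real (T'_par A n)" using d by (simp add: T_def T_par_def of_nat_diff)
  have "q \<le> real (T'_par A n)" using T' by linarith
  also have "\<dots> \<le> T" using T_eq d mult_right_mono[of 1 "real d - 1" "real (T'_par A n)"] by simp
  finally have "q \<le> T" .
  then show "z ^ 4 / A \<le> real (T_par d A n)" by (simp add: q_def T_def)
  have "real (T'_par A n) \<le> 2 * q" using T' q by linarith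
  then have "T \<le> (real d - 1) * (2 * q)" unfolding T_eq using d by (intro mult_left_mono) auto
  also have "\<dots> \<le> 2 * real d * q" using q by simp
  finally have T_le: "T \<le> 2 * real d * q" .
  then show "real (T_par d A n) \<le> 2 * real d * (z ^ 4 / A)" by (simp add: q_def T_def)
  define ell where "ell = real (d * n) / (4 * T)"
  have T_pos: "0 < T" using \<open>q \<le> T\<close> q by linarith
  have ellT: "ell * T = real d * z ^ 6 / 4" using T_pos n by (simp add: ell_def)
  have "q \<le> z ^ 4 / 1" unfolding q_def using A by (intro divide_left_mono) auto
  moreover have "8 * z ^ 4 \<le> z\<^sup>2 * z ^ 4" using z by (intro mult_right_mono) auto
  moreover have "z\<^sup>2 * z ^ 4 = z ^ 6" by (simp flip: power_add)
  ultimately have "8 * q \<le> z ^ 6" by simp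
  then have "real d * (8 * q) \<le> real d * z ^ 6" by (intro mult_left_mono) auto
  then have "4 * T \<le> real d * z ^ 6" using T_le by simp
  then have ell: "1 \<le> ell" using T_pos n by (simp add: ell_def)
  have L: "L_par d A n = nat \<lfloor>ell\<rfloor>" by (simp add: L_par_def ell_def T_def)
  note L_bounds = nat_floor_bounds[OF ell, folded L]
  show "1 \<le> L_par d A n" using L_bounds(3) .
  have "real d * z ^ 6 / 8 = ell / 2 * T" using ellT by simp
  also have "\<dots> \<le> real (L_par d A n) * T" using L_bounds(1) T_pos by (intro mult_right_mono) auto
  finally show "real d * z ^ 6 / 8 \<le> real (L_par d A n) * real (T_par d A n)" by (simp add: T_def)
  have "real (L_par d A n) * T \<le> ell * T" using L_bounds(2) T_pos by (intro mult_right_mono) auto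
  then show "real (L_par d A n) * real (T_par d A n) \<le> real d * z ^ 6 / 4" using ellT by (simp add: T_def)
qed

lemma window_sq:
  fixes B L T :: real
  assumes "0 < T"
  shows "(B * L * sqrt T)\<^sup>2 = B\<^sup>2 * (L * T)\<^sup>2 / T"
  using assms by (simp add: power_mult_distrib power2_eq_square)

lemma window_le:
  fixes A B K L T z :: real
  assumes T: "0 < T" "z ^ 4 / A \<le> T" and LT: "0 \<le> L * T" "L * T \<le> d * z ^ 6 / 4"
    and z: "0 < z" and A: "1 \<le> A" "A \<le> K * z" and K: "B\<^sup>2 * d\<^sup>2 * K \<le> 4 * z ^ 3"
  shows "B * L * sqrt T \<le> z ^ 6 / 2"
proof (rule power2_le_imp_le)
  have "(B * L * sqrt T)\<^sup>2 \<le> B\<^sup>2 * (d * z ^ 6 / 4)\<^sup>2 / T"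
    unfolding window_sq[OF T(1)] using LT T by (intro divide_right_mono mult_left_mono power_mono) auto
  also have "\<dots> \<le> B\<^sup>2 * (d * z ^ 6 / 4)\<^sup>2 / (z ^ 4 / A)"
    using T z A by (intro divide_left_mono) auto
  also have "\<dots> = B\<^sup>2 * d\<^sup>2 * A * z ^ 8 / 16"
    using z A by (simp add: field_simps power_mult_distrib; simp add: power2_eq_square power_add[symmetric])
  also have "\<dots> \<le> B\<^sup>2 * d\<^sup>2 * (K * z) * z ^ 8 / 16"
    using A by (intro divide_right_mono mult_right_mono mult_left_mono) auto
  also have "\<dots> = (B\<^sup>2 * d\<^sup>2 * K) * z ^ 9 / 16"
    by (simp add: eval_nat_numeral algebra_simps)
  also have "\<dots> \<le> (4 * z ^ 3) * z ^ 9 / 16" using K z by (intro divide_right_mono mult_right_mono) auto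
  also have "\<dots> = (z ^ 6 / 2)\<^sup>2" by (simp add: power2_eq_square power_add[symmetric] field_simps)
  finally show "(B * L * sqrt T)\<^sup>2 \<le> (z ^ 6 / 2)\<^sup>2" .
qed (use z in simp)

lemma window_ge:
  fixes A B L T z :: real
  assumes T: "0 < T" "T \<le> 2 * d * (z ^ 4 / A)" and L: "0 \<le> L" and LT: "d * z ^ 6 / 8 \<le> L * T"
    and z: "0 < z" and A: "1 \<le> A" and B: "0 \<le> B" and d: "2 \<le> d"
  shows "B * sqrt A * z ^ 4 / 8 \<le> B * L * sqrt T"
proof (rule power2_le_imp_le)
  have "(B * sqrt A * z ^ 4 / 8)\<^sup>2 = B\<^sup>2 * A * z ^ 8 / 64"
    using A by (simp add: power_mult_distrib power2_eq_square power_add[symmetric] field_simps)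
  also have "\<dots> \<le> B\<^sup>2 * d * A * z ^ 8 / 128"
    using mult_right_mono[OF d, of "B\<^sup>2 * A * z ^ 8"] A by (simp add: field_simps)
  also have "\<dots> = B\<^sup>2 * (d * z ^ 6 / 8)\<^sup>2 / (2 * d * (z ^ 4 / A))"
    using z A d by (simp add: field_simps power_mult_distrib; simp add: power2_eq_square power_add[symmetric])
  also have "\<dots> \<le> B\<^sup>2 * (d * z ^ 6 / 8)\<^sup>2 / T"
    using T z A d by (intro divide_left_mono) auto
  also have "\<dots> \<le> (B * L * sqrt T)\<^sup>2"
    unfolding window_sq[OF T(1)] using LT T z d by (intro divide_right_mono mult_left_mono power_mono) auto
  finally show "(B * sqrt A * z ^ 4 / 8)\<^sup>2 \<le> (B * L * sqrt T)\<^sup>2" .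
qed (use B L T in simp)

lemma drift_dominates:
  fixes m \<kappa> \<epsilon> d L :: real
  assumes \<kappa>: "0 < \<kappa>" and m: "2 \<le> m" and \<epsilon>: "32 * \<kappa> * \<epsilon> \<le> m"
    and dL: "32 * \<kappa> * (2 * d * L + d) \<le> m\<^sup>2"
  shows "m\<^sup>2 / (16 * \<kappa>) \<le> m * (m - 1) / (4 * \<kappa>) - m * \<epsilon> - 2 * d * L - d"
proof -
  have "2 * m \<le> m * m" using m by (intro mult_right_mono) auto
  then have "m\<^sup>2 / 2 \<le> m * (m - 1)" by (simp add: power2_eq_square algebra_simps)
  then have "m\<^sup>2 / (8 * \<kappa>) \<le> m * (m - 1) / (4 * \<kappa>)" using \<kappa> by (simp add: field_simps)
  moreover have "m * \<epsilon> \<le> m\<^sup>2 / (32 * \<kappa>)"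
    using mult_left_mono[OF \<epsilon>, of m] m \<kappa> by (simp add: field_simps power2_eq_square)
  moreover have "2 * d * L + d \<le> m\<^sup>2 / (32 * \<kappa>)" using dL \<kappa> by (simp add: field_simps)
  moreover have "m\<^sup>2 / (8 * \<kappa>) - 2 * (m\<^sup>2 / (32 * \<kappa>)) = m\<^sup>2 / (16 * \<kappa>)"
    using \<kappa> by (simp add: field_simps)
  ultimately show ?thesis by linarith
qed

lemma tail_exponent_ge:
  fixes m \<kappa> D A z d :: real
  assumes \<kappa>: "0 < \<kappa>" "\<kappa> \<le> 4 * d\<^sup>2 * z ^ 6" and D: "m\<^sup>2 / (16 * \<kappa>) \<le> D"
    and m: "sqrt A * z ^ 4 / 16 \<le> m" and z: "0 < z" and A: "0 < A" and d: "0 < d"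
  shows "A * sqrt A / (4096 * 36864 * 16 * d ^ 6) \<le> D\<^sup>2 / (4 * m * (6 * d)\<^sup>2)"
proof -
  define s where "s = sqrt A"
  have s: "0 < s" "s ^ 3 = A * sqrt A" using A by (simp_all add: s_def power3_eq_cube)
  have "0 < s * z ^ 4 / 16" using s z by simp
  then have m_pos: "0 < m" using m unfolding s_def by linarith
  have "(s * z ^ 4 / 16) ^ 3 = s ^ 3 * z ^ 12 / 4096"
    by (simp add: power_mult_distrib power_divide flip: power_mult)
  moreover have "d ^ 6 = d\<^sup>2 * d ^ 4" by (simp flip: power_add)
  ultimately have "A * sqrt A / (4096 * 36864 * 16 * d ^ 6)
      = (s * z ^ 4 / 16) ^ 3 / (36864 * d\<^sup>2 * (16 * d ^ 4 * z ^ 12))"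
    using z d unfolding s(2)[symmetric] by (simp add: field_simps)
  also have "\<dots> \<le> m ^ 3 / (36864 * d\<^sup>2 * (16 * d ^ 4 * z ^ 12))"
    using m s z d unfolding s_def[symmetric] by (intro divide_right_mono power_mono) auto
  also have "\<dots> \<le> m ^ 3 / (36864 * d\<^sup>2 * \<kappa>\<^sup>2)"
  proof (rule divide_left_mono)
    have "\<kappa>\<^sup>2 \<le> (4 * d\<^sup>2 * z ^ 6)\<^sup>2" using \<kappa> by (intro power_mono) auto
    also have "\<dots> = 16 * d ^ 4 * z ^ 12" by (simp add: power_mult_distrib flip: power_mult)
    finally show "36864 * d\<^sup>2 * \<kappa>\<^sup>2 \<le> 36864 * d\<^sup>2 * (16 * d ^ 4 * z ^ 12)"
      by (rule mult_left_mono) simp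
  qed (use m_pos \<kappa> d z in auto)
  also have "\<dots> = (m\<^sup>2 / (16 * \<kappa>))\<^sup>2 / (4 * m * (6 * d)\<^sup>2)"
    using m_pos \<kappa> d by (simp add: field_simps power2_eq_square power3_eq_cube)
  also have "\<dots> \<le> D\<^sup>2 / (4 * m * (6 * d)\<^sup>2)"
    using D \<kappa> m_pos d by (intro divide_right_mono power_mono) auto
  finally show ?thesis .
qed

lemma near_critical_perc_p:
  fixes z lam :: real
  assumes d: "d \<ge> 3" and z: "0 < z" and n: "real n = z ^ 6" and lam: "2 * real d * \<bar>lam\<bar> \<le> z\<^sup>2"
  shows "near_critical d (perc_p d lam n) (\<bar>lam\<bar> / z\<^sup>2)"
proof -
  define e where "e = lam / z\<^sup>2"
  have "real n powr (1/3) = z\<^sup>2" using sixth_root_powr[OF z, of 2] n by simp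
  then have p: "perc_p d lam n = (1 + e) / (real d - 1)"
    by (simp add: perc_p_def e_def powr_minus_divide)
  have "\<bar>e\<bar> * real d \<le> 1/2"
    using lam z by (simp add: e_def abs_divide field_simps)
  moreover have "\<bar>e\<bar> * 3 \<le> \<bar>e\<bar> * real d" "\<bar>e\<bar> * (real d - 2) \<le> \<bar>e\<bar> * real d"
    using d by (intro mult_left_mono; simp)+
  moreover have "e * (real d - 2) \<le> \<bar>e\<bar> * (real d - 2)" using d by (intro mult_right_mono) auto
  ultimately have e: "\<bar>e\<bar> \<le> 1/6" "e * (real d - 2) \<le> 1/2" by linarith+
  define q where "q = perc_p d lam n"
  have d1: "real d - 1 > 0" "3 \<le> real d" using d by simp_all
  have q1: "q * (real d - 1) = 1 + e" using d1 by (simp add: q_def p)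
  have "q * (real d - 2) - 1 = (e * (real d - 2) - 1) / (real d - 1)"
    using d1 by (simp add: q_def p field_simps)
  also have "\<dots> \<le> (- 1/2) / (real d - 1)"
    using e(2) d1 by (intro divide_right_mono) auto
  also have "\<dots> = - 1 / (2 * (real d - 1))" by simp
  finally have q2: "q * (real d - 2) - 1 \<le> - 1 / (2 * (real d - 1))" .
  have "e \<le> 1/6" using e(1) by linarith
  then have q3: "1/2 \<le> (1 - q) * (real d - 1)" using q1 d1 by (simp add: algebra_simps)
  have "0 \<le> q" "q \<le> 1" using e d1 by (simp_all add: q_def p)
  moreover have "e \<le> \<bar>lam\<bar> / z\<^sup>2" using z by (simp add: e_def divide_right_mono)
  ultimately show ?thesis using q1 q2 q3 unfolding near_critical_def q_def[symmetric] by simp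
qed

lemma window_bounds:
  fixes A B K z :: real
  assumes d: "d \<ge> 3" and z: "0 < z" "8 \<le> z\<^sup>2" and n: "real n = z ^ 6"
    and A: "1 \<le> A" "A \<le> K * z" and K: "K \<le> z ^ 3" "B\<^sup>2 * (real d)\<^sup>2 * K \<le> 4 * z ^ 3"
    and B: "0 \<le> B"
  defines "b \<equiv> B * real (L_par d A n) * sqrt (real (T_par d A n))"
  shows "1 \<le> L_par d A n" "B * sqrt A * z ^ 4 / 8 \<le> b" "b \<le> z ^ 6 / 2"
    "B\<^sup>2 * real (L_par d A n) * (real d * z ^ 6 / 8) \<le> b\<^sup>2"
proof -
  define L T where "L = real (L_par d A n)" and "T = real (T_par d A n)"
  have "K * z \<le> z ^ 3 * z" using K z by (intro mult_right_mono) auto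
  then have "A \<le> z ^ 4" using A by (simp add: power_Suc2[symmetric] del: power_Suc2)
  note S = excursion_scale_bounds[OF d z n A(1) this, folded L_def T_def]
  show "1 \<le> L_par d A n" by (rule S(3))
  have "0 < z ^ 4 / A" using z A by simp
  then have T: "0 < T" using S(1) by linarith
  have L: "0 \<le> L" by (simp add: L_def)
  show "B * sqrt A * z ^ 4 / 8 \<le> b"
    unfolding b_def L_def[symmetric] T_def[symmetric] using d
    by (intro window_ge[OF T S(2) L S(4) z(1) A(1) B]) simp
  show "b \<le> z ^ 6 / 2"
    unfolding b_def L_def[symmetric] T_def[symmetric] using L T
    by (intro window_le[OF T S(1) _ S(5) z(1) A K(2)]) simp
  have "B\<^sup>2 * L * (real d * z ^ 6 / 8) \<le> B\<^sup>2 * L * (L * T)"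
    using S(4) L by (intro mult_left_mono) auto
  also have "\<dots> = b\<^sup>2"
    unfolding b_def L_def[symmetric] T_def[symmetric] window_sq[OF T] using T
    by (simp add: power2_eq_square)
  finally show "B\<^sup>2 * real (L_par d A n) * (real d * z ^ 6 / 8) \<le> b\<^sup>2" by (simp add: L_def)
qed

lemma drift_scale_le: "real n = z ^ 6 \<Longrightarrow> drift_scale d n \<le> 4 * (real d)\<^sup>2 * z ^ 6"
  using mult_left_mono[of "real d - 1" "real d" "4 * real d * z ^ 6"]
  by (simp add: drift_scale_def power2_eq_square algebra_simps)

text \<open>The window \<open>m = \<lfloor>B L T\<^sup>1\<^sup>/\<^sup>2\<rfloor>\<close> has order \<open>B A\<^sup>1\<^sup>/\<^sup>2 z\<^sup>4\<close>, large enough for the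
  drift to dominate and at most \<open>n/2\<close> as \<open>A = O(z)\<close>.\<close>

lemma window_choice:
  fixes A B K z lam :: real
  assumes d: "d \<ge> 3" and z: "0 < z" "8 \<le> z\<^sup>2" and n: "real n = z ^ 6"
    and A: "(2048 * (real d)\<^sup>2 * \<bar>lam\<bar>)\<^sup>2 + 1 \<le> A" "A \<le> K * z"
    and K: "K \<le> z ^ 3" "B\<^sup>2 * (real d)\<^sup>2 * K \<le> 4 * z ^ 3" and B: "128 * real d \<le> B"
  defines "m \<equiv> nat \<lfloor>B * real (L_par d A n) * sqrt (real (T_par d A n))\<rfloor>"
  shows "2 \<le> real m" "2 * m \<le> n" "real m \<le> B * real (L_par d A n) * sqrt (real (T_par d A n))"
    "sqrt A * z ^ 4 / 16 \<le> real m" "32 * drift_scale d n * (\<bar>lam\<bar> / z\<^sup>2) \<le> real m"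
    "32 * drift_scale d n * (2 * real d * real (L_par d A n) + real d) \<le> (real m)\<^sup>2"
    "1 \<le> L_par d A n"
proof -
  define b where "b = B * real (L_par d A n) * sqrt (real (T_par d A n))"
  define L where "L = real (L_par d A n)"
  have B1: "1 \<le> B" using B d by linarith
  then have B0: "0 \<le> B" by simp
  have sqrt_A: "2048 * (real d)\<^sup>2 * \<bar>lam\<bar> \<le> sqrt A" using A(1) by (intro real_le_rsqrt) simp
  have A1: "1 \<le> A" using A(1) zero_le_power2[of "2048 * (real d)\<^sup>2 * \<bar>lam\<bar>"] by linarith
  note W = window_bounds[OF d z n A1 A(2) K B0, folded b_def L_def]
  have "64 \<le> z ^ 4" using mult_mono[OF z(2) z(2)] by (simp flip: power_add)
  then have "1 * 1 * 64 / 8 \<le> B * sqrt A * z ^ 4 / 8" using B1 A1 by (intro divide_right_mono mult_mono) auto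
  then have b4: "4 \<le> b" using W(2) B1 by simp
  have m_eq: "m = nat \<lfloor>b\<rfloor>" by (simp add: m_def b_def)
  have m: "b / 2 \<le> real m" "real m \<le> b" using nat_floor_bounds[of b] b4 by (simp_all add: m_eq)
  show m2: "2 \<le> real m" using m b4 by simp
  show "real m \<le> B * real (L_par d A n) * sqrt (real (T_par d A n))" using m b4 by (simp add: b_def)
  have "real (2 * m) \<le> real n" using m b4 W(3) n by simp
  then show "2 * m \<le> n" by (simp only: of_nat_le_iff)
  have "1 * (sqrt A * z ^ 4) \<le> B * (sqrt A * z ^ 4)" using B1 A1 z by (intro mult_right_mono) auto
  then show m_A: "sqrt A * z ^ 4 / 16 \<le> real m" using m b4 W(2) by simp
  have \<kappa>: "drift_scale d n \<le> 4 * (real d)\<^sup>2 * z ^ 6" using n by (rule drift_scale_le)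
  have "32 * drift_scale d n * (\<bar>lam\<bar> / z\<^sup>2) \<le> 32 * (4 * (real d)\<^sup>2 * z ^ 6) * (\<bar>lam\<bar> / z\<^sup>2)"
    using \<kappa> by (intro mult_right_mono) (linarith, simp)
  also have "\<dots> = 2048 * (real d)\<^sup>2 * \<bar>lam\<bar> * z ^ 4 / 16"
    using z by (simp add: field_simps eval_nat_numeral)
  also have "\<dots> \<le> sqrt A * z ^ 4 / 16" using sqrt_A z by (intro divide_right_mono mult_right_mono) auto
  finally show "32 * drift_scale d n * (\<bar>lam\<bar> / z\<^sup>2) \<le> real m" using m_A by linarith
  show "1 \<le> L_par d A n" using W(1) .
  then have L1: "1 \<le> L" by (simp add: L_def)
  have "32 * drift_scale d n * (2 * real d * L + real d) \<le> 32 * (4 * (real d)\<^sup>2 * z ^ 6) * (3 * real d * L)"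
    using \<kappa> L1 d mult_right_mono[OF L1, of "real d"] by (intro mult_mono) (auto simp: drift_scale_def)
  also have "\<dots> \<le> (128 * real d)\<^sup>2 * L * (real d * z ^ 6 / 8) / 4"
    using L1 z by (simp add: power2_eq_square field_simps)
  also have "\<dots> \<le> B\<^sup>2 * L * (real d * z ^ 6 / 8) / 4"
    using B d L1 z by (intro divide_right_mono mult_right_mono power_mono) auto
  also have "\<dots> \<le> (b / 2)\<^sup>2" using divide_right_mono[OF W(4), of 4] by (simp add: L_def power_divide)
  also have "\<dots> \<le> (real m)\<^sup>2" using m b4 by (intro power_mono) auto
  finally show "32 * drift_scale d n * (2 * real d * real (L_par d A n) + real d) \<le> (real m)\<^sup>2"
    by (simp add: L_def)
qed

lemma prob_not_G_event_le:
  fixes lam A B K :: real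
  assumes d: "d \<ge> 3" and n: "n > 0" and ev: "even (d * n)" and sel: "valid_sel sel"
    and A: "(2048 * (real d)\<^sup>2 * \<bar>lam\<bar>)\<^sup>2 + 1 \<le> A" "A \<le> K * real n powr (1/6)"
    and B: "128 * real d \<le> B" and K: "0 \<le> K"
    and large: "K + 8 + 2 * real d * \<bar>lam\<bar> + B\<^sup>2 * (real d)\<^sup>2 * K \<le> real n powr (1/6)"
  shows "measure_pmf.prob (expl_process n d (perc_p d lam n) sel) (- G_event d A B n)
     \<le> exp (- (1 / (4096 * 36864 * 16 * real d ^ 6)) * A powr (3/2))"
proof -
  define z where "z = real n powr (1/6)"
  define m where "m = nat \<lfloor>B * real (L_par d A n) * sqrt (real (T_par d A n))\<rfloor>"
  define D where "D = real m * (real m - 1) / (4 * drift_scale d n) - real m * (\<bar>lam\<bar> / z\<^sup>2)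
    - 2 * real d * real (L_par d A n) - real d"
  have z: "0 < z" using n by (simp add: z_def)
  have n_z: "real n = z ^ 6"
    using powr_realpow[OF z, of 6] n by (simp add: z_def powr_powr)
  have "0 \<le> 2 * real d * \<bar>lam\<bar>" "0 \<le> B\<^sup>2 * (real d)\<^sup>2 * K" using K by simp_all
  then have z_large: "1 \<le> z" "K \<le> z" "8 \<le> z" "2 * real d * \<bar>lam\<bar> \<le> z" "B\<^sup>2 * (real d)\<^sup>2 * K \<le> z"
    using large K unfolding z_def[symmetric] by linarith+
  have "z \<le> z\<^sup>2" "z \<le> z ^ 3" using z_large(1) by (simp_all add: power_increasing[of 1 _ z, simplified])
  then have conds: "8 \<le> z\<^sup>2" "2 * real d * \<bar>lam\<bar> \<le> z\<^sup>2" "K \<le> z ^ 3" "B\<^sup>2 * (real d)\<^sup>2 * K \<le> 4 * z ^ 3"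
    using z_large by linarith+
  note W = window_choice[OF d z conds(1) n_z A(1) A(2)[folded z_def] conds(3,4) B, folded m_def]
  have \<kappa>: "0 < drift_scale d n" using drift_scale_pos[OF d n] .
  have A_pos: "0 < A" using A(1) zero_le_power2[of "2048 * (real d)\<^sup>2 * \<bar>lam\<bar>"] by linarith
  have D: "(real m)\<^sup>2 / (16 * drift_scale d n) \<le> D"
    unfolding D_def by (rule drift_dominates[OF \<kappa> W(1) W(5) W(6)])
  moreover have "0 < (real m)\<^sup>2 / (16 * drift_scale d n)" using W(1) \<kappa> by simp
  ultimately have "measure_pmf.prob (expl_traj n d (perc_p d lam n) sel (d * n div 2))
      {xs. \<not> real (exc_time (Yproc xs) (2 * L_par d A n - 1)) \<le> B * real (L_par d A n) * sqrt (real (T_par d A n))}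
    \<le> exp (- (D\<^sup>2 / (4 * real m * (6 * real d)\<^sup>2)))"
    using W(1) by (intro prob_late_excursion_le[OF sel n d ev near_critical_perc_p[OF d z n_z conds(2)]
          W(2) _ W(7) W(3) D_def]) auto
  also have "\<dots> \<le> exp (- (A * sqrt A / (4096 * 36864 * 16 * real d ^ 6)))"
    using tail_exponent_ge[OF \<kappa> drift_scale_le[OF n_z] D W(4) z A_pos] d by simp
  also have "A * sqrt A = A powr (3/2)"
    using powr_add[of A 1 "1/2"] A_pos by (simp add: powr_half_sqrt)
  finally show ?thesis by (simp add: expl_process_def G_event_def flip: Collect_neg_eq)
qed

lemma eventually_prob_not_G_event_le:
  fixes lam B :: real and Af :: "nat \<Rightarrow> real"
  assumes d: "d \<ge> 3" and B: "128 * real d \<le> B" and A: "\<forall>n. (2048 * (real d)\<^sup>2 * \<bar>lam\<bar>)\<^sup>2 + 1 \<le> Af n"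
    and A_O: "Af \<in> O(\<lambda>n. real n powr (1/6))" and sel: "\<forall>n. valid_sel (sel n)"
  shows "\<forall>\<^sub>F n in sequentially. even (d * n) \<longrightarrow>
     measure_pmf.prob (expl_process n d (perc_p d lam n) (sel n)) (- G_event d (Af n) B n)
       \<le> exp (- (1 / (4096 * 36864 * 16 * real d ^ 6)) * Af n powr (3/2))"
proof -
  obtain K where K: "0 < K" "\<forall>\<^sub>F n in sequentially. norm (Af n) \<le> K * norm (real n powr (1/6))"
    using A_O by (elim landau_o.bigE) auto
  define Z where "Z = K + 8 + 2 * real d * \<bar>lam\<bar> + B\<^sup>2 * (real d)\<^sup>2 * K"
  have Z: "0 < Z" using K by (simp add: Z_def add_pos_nonneg)
  have "\<forall>\<^sub>F n in sequentially. Z ^ 6 \<le> real n"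
    using eventually_ge_at_top[of "nat \<lceil>Z ^ 6\<rceil>"] by eventually_elim linarith
  then have "\<forall>\<^sub>F n in sequentially. Z \<le> real n powr (1/6) \<and> 0 < n"
  proof (rule eventually_mono)
    fix n assume n: "Z ^ 6 \<le> real n"
    moreover have "0 < Z ^ 6" using Z by simp
    ultimately have "0 < real n" by linarith
    then show "Z \<le> real n powr (1/6) \<and> 0 < n"
      using sixth_root_powr[OF Z, of 1] powr_mono2[of "1/6" "Z ^ 6" "real n"] n by simp
  qed
  with K(2) show ?thesis
  proof eventually_elim
    case (elim n)
    then have AK: "Af n \<le> K * real n powr (1/6)" by simp
    show ?case
      using prob_not_G_event_le[OF d _ _ sel[rule_format] A[rule_format] AK B less_imp_le[OF K(1)]] elim
      by (simp add: Z_def)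
  qed
qed

theorem proposition3:
  fixes d :: nat
  assumes "d \<ge> 3"
  shows "\<exists>B0>0. \<forall>lam :: real. \<exists>A0>0. \<forall>B\<ge>B0. \<exists>c>0.
     \<forall>(Af :: nat \<Rightarrow> real) (sel :: nat \<Rightarrow> expl_state list \<Rightarrow> stub).
       (\<forall>n. Af n \<ge> A0) \<longrightarrow> Af \<in> O(\<lambda>n. real n powr (1/6)) \<longrightarrow> (\<forall>n. valid_sel (sel n)) \<longrightarrow>
       (\<forall>\<^sub>F n in sequentially. even (d * n) \<longrightarrow>
          measure_pmf.prob (expl_process n d (perc_p d lam n) (sel n)) (- G_event d (Af n) B n)
            \<le> exp (- c * Af n powr (3/2)))"
proof -
  define c where "c = 1 / (4096 * 36864 * 16 * real d ^ 6)"
  define A0 where "A0 lam = (2048 * (real d)\<^sup>2 * \<bar>lam\<bar>)\<^sup>2 + 1" for lam :: real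
  have "0 < 128 * real d" "0 < c" using assms by (simp_all add: c_def)
  moreover have "0 < A0 lam" for lam unfolding A0_def by (intro add_nonneg_pos) simp_all
  moreover note eventually_prob_not_G_event_le[OF assms, folded c_def A0_def]
  ultimately show ?thesis by blast
qed

end
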